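(* Let $1\le a\le b\le c$ be integers and $K=K_{a,b,c}$. Suppose $\epsilon>0$, $d\ge 2bc^2\epsilon$, and $n$ is sufficiently large. Let $H$ be a $3$-graph on $n$ vertices with an $(\epsilon,t)$-regular partition $\mathcal P$ and cluster hypergraph $\mathcal R=\mathcal R(\epsilon,d,\mathcal P)$. Suppose that there is a fractional hom$(K)$-tiling $h$ of $\mathcal R$ with $h_{\min}\ge\frac1{bc^2}$. Then there exists a $K$-tiling of $H$ that covers at least $(1-2bc^3\epsilon)\,w(h)\,n/t$ vertices.
   Context: $K_{a,b,c}$ is the complete $3$-partite $3$-graph with parts of sizes $a,b,c$; a $K$-tiling is a collection of vertex-disjoint copies of $K$. For disjoint nonempty $V_1,V_2,V_3\subseteq V(H)$, $d(V_1,V_2,V_3)$ is the number of edges with one vertex in each $V_i$ divided by $|V_1||V_2||V_3|$; $(V_1,V_2,V_3)$ is $(\epsilon,d)$-regular if $|d(A_1,A_2,A_3)-d|\le\epsilon$ for all $A_i\subseteq V_i$ with $|A_i|\ge\epsilon|V_i|$, and $\epsilon$-regular if it is $(\epsilon,d)$-regular for some $d\ge0$. An $(\epsilon,t)$-regular partition of $H$ is a partition $V(H)=V_0\cup V_1\cup\dots\cup V_t$ with $|V_1|=\dots=|V_t|$, $|V_0|\le\epsilon n$, and all but at most $\epsilon\binom t3$ triples $\{i,j,l\}\in\binom{[t]}3$ having $(V_i,V_j,V_l)$ $\epsilon$-regular. The cluster hypergraph $\mathcal R(\epsilon,d,\mathcal P)$ is the $3$-graph on vertex set $\{V_1,\dots,V_t\}$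 in which $\{V_i,V_j,V_l\}$ is an edge iff $(V_i,V_j,V_l)$ is $\epsilon$-regular and $d(V_i,V_j,V_l)\ge d$. For a $3$-graph $G=(V,E)$, a function $h:V\times E\to[0,1]$ is a fractional hom$(K)$-tiling of $G$ if (1) $h(v,e)=0$ whenever $v\notin e$; (2) $h(v)=\sum_{e\in E}h(v,e)\le1$ for all $v$; (3) every $e\in E$ has a labeling $e=uvw$ with $h(u,e)\le h(v,e)\le h(w,e)$ and $\frac{h(u,e)}a\ge\frac{h(v,e)}b\ge\frac{h(w,e)}c$. Here $h_{\min}$ is the smallest nonzero value of $h(v,e)$ and $w(h)=\sum_{(v,e)\in V\times E}h(v,e)$. *)

theory Defs
  imports Complex_Main
begin

definition three_graph :: "'a set \<Rightarrow> 'a set set \<Rightarrow> bool" where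
  "three_graph V E \<longleftrightarrow> finite V \<and> (\<forall>e\<in>E. e \<subseteq> V \<and> card e = 3)"

definition density :: "'a set set \<Rightarrow> 'a set \<Rightarrow> 'a set \<Rightarrow> 'a set \<Rightarrow> real" where
  "density E V1 V2 V3 =
     real (card {e\<in>E. \<exists>x\<in>V1. \<exists>y\<in>V2. \<exists>z\<in>V3. e = {x, y, z}})
     / (real (card V1) * real (card V2) * real (card V3))"

definition eps_d_regular :: "'a set set \<Rightarrow> real \<Rightarrow> real \<Rightarrow> 'a set \<Rightarrow> 'a set \<Rightarrow> 'a set \<Rightarrow> bool" where
  "eps_d_regular E \<epsilon> d V1 V2 V3 \<longleftrightarrow>
     (\<forall>A1 A2 A3. A1 \<subseteq> V1 \<and> A2 \<subseteq> V2 \<and> A3 \<subseteq> V3 \<and>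
        real (card A1) \<ge> \<epsilon> * real (card V1) \<and>
        real (card A2) \<ge> \<epsilon> * real (card V2) \<and>
        real (card A3) \<ge> \<epsilon> * real (card V3) \<longrightarrow>
        \<bar>density E A1 A2 A3 - d\<bar> \<le> \<epsilon>)"

definition eps_regular :: "'a set set \<Rightarrow> real \<Rightarrow> 'a set \<Rightarrow> 'a set \<Rightarrow> 'a set \<Rightarrow> bool" where
  "eps_regular E \<epsilon> V1 V2 V3 \<longleftrightarrow> (\<exists>d\<ge>0. eps_d_regular E \<epsilon> d V1 V2 V3)"

text \<open>(\<epsilon>,t)-regular partition V = P 0 \<union> P 1 \<union> ... \<union> P t (P 0 is the exceptional set V_0).\<close>
definition regular_partition ::
  "'a set \<Rightarrow> 'a set set \<Rightarrow> real \<Rightarrow> nat \<Rightarrow> (nat \<Rightarrow> 'a set) \<Rightarrow> bool" where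
  "regular_partition V E \<epsilon> t P \<longleftrightarrow>
     V = (\<Union>i\<in>{0..t}. P i) \<and>
     (\<forall>i\<in>{0..t}. \<forall>j\<in>{0..t}. i \<noteq> j \<longrightarrow> P i \<inter> P j = {}) \<and>
     (\<forall>i\<in>{1..t}. P i \<noteq> {}) \<and>
     (\<forall>i\<in>{1..t}. \<forall>j\<in>{1..t}. card (P i) = card (P j)) \<and>
     real (card (P 0)) \<le> \<epsilon> * real (card V) \<and>
     real (card {T. T \<subseteq> {1..t} \<and> card T = 3 \<and>
                \<not> (\<exists>i j l. T = {i, j, l} \<and> eps_regular E \<epsilon> (P i) (P j) (P l))})
       \<le> \<epsilon> * real (t choose 3)"

text \<open>Edges of the cluster hypergraph R(\<epsilon>,d,P); cluster V_i is represented by its index i \<in> {1..t}.\<close>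
definition cluster_edges ::
  "'a set set \<Rightarrow> real \<Rightarrow> real \<Rightarrow> nat \<Rightarrow> (nat \<Rightarrow> 'a set) \<Rightarrow> nat set set" where
  "cluster_edges E \<epsilon> d t P =
     {{i, j, l} | i j l. i \<in> {1..t} \<and> j \<in> {1..t} \<and> l \<in> {1..t} \<and>
        i \<noteq> j \<and> j \<noteq> l \<and> i \<noteq> l \<and>
        eps_regular E \<epsilon> (P i) (P j) (P l) \<and> density E (P i) (P j) (P l) \<ge> d}"

definition frac_hom_tiling ::
  "nat \<Rightarrow> nat \<Rightarrow> nat \<Rightarrow> 'v set \<Rightarrow> 'v set set \<Rightarrow> ('v \<Rightarrow> 'v set \<Rightarrow> real) \<Rightarrow> bool" where
  "frac_hom_tiling a b c VG EG h \<longleftrightarrow>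
     (\<forall>v\<in>VG. \<forall>e\<in>EG. 0 \<le> h v e \<and> h v e \<le> 1) \<and>
     (\<forall>v\<in>VG. \<forall>e\<in>EG. v \<notin> e \<longrightarrow> h v e = 0) \<and>
     (\<forall>v\<in>VG. (\<Sum>e\<in>EG. h v e) \<le> 1) \<and>
     (\<forall>e\<in>EG. \<exists>u v w. e = {u, v, w} \<and> u \<noteq> v \<and> v \<noteq> w \<and> u \<noteq> w \<and>
        h u e \<le> h v e \<and> h v e \<le> h w e \<and>
        h u e / real a \<ge> h v e / real b \<and> h v e / real b \<ge> h w e / real c)"

definition tiling_weight :: "'v set \<Rightarrow> 'v set set \<Rightarrow> ('v \<Rightarrow> 'v set \<Rightarrow> real) \<Rightarrow> real" where
  "tiling_weight VG EG h = (\<Sum>v\<in>VG. \<Sum>e\<in>EG. h v e)"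

definition hmin_ge :: "'v set \<Rightarrow> 'v set set \<Rightarrow> ('v \<Rightarrow> 'v set \<Rightarrow> real) \<Rightarrow> real \<Rightarrow> bool" where
  "hmin_ge VG EG h m \<longleftrightarrow> (\<forall>v\<in>VG. \<forall>e\<in>EG. h v e \<noteq> 0 \<longrightarrow> m \<le> h v e)"

definition K_copy :: "nat \<Rightarrow> nat \<Rightarrow> nat \<Rightarrow> 'a set \<Rightarrow> 'a set set \<Rightarrow> 'a set \<times> 'a set \<times> 'a set \<Rightarrow> bool" where
  "K_copy a b c V E K \<longleftrightarrow> (case K of (X, Y, Z) \<Rightarrow>
     X \<subseteq> V \<and> Y \<subseteq> V \<and> Z \<subseteq> V \<and>
     X \<inter> Y = {} \<and> Y \<inter> Z = {} \<and> X \<inter> Z = {} \<and>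
     card X = a \<and> card Y = b \<and> card Z = c \<and>
     (\<forall>x\<in>X. \<forall>y\<in>Y. \<forall>z\<in>Z. {x, y, z} \<in> E))"

definition copy_verts :: "'a set \<times> 'a set \<times> 'a set \<Rightarrow> 'a set" where
  "copy_verts K = (case K of (X, Y, Z) \<Rightarrow> X \<union> Y \<union> Z)"

definition K_tiling :: "nat \<Rightarrow> nat \<Rightarrow> nat \<Rightarrow> 'a set \<Rightarrow> 'a set set \<Rightarrow> ('a set \<times> 'a set \<times> 'a set) set \<Rightarrow> bool" where
  "K_tiling a b c V E \<T> \<longleftrightarrow>
     (\<forall>K\<in>\<T>. K_copy a b c V E K) \<and>
     (\<forall>K\<in>\<T>. \<forall>K'\<in>\<T>. K \<noteq> K' \<longrightarrow> copy_verts K \<inter> copy_verts K' = {})"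

definition covered :: "('a set \<times> 'a set \<times> 'a set) set \<Rightarrow> 'a set" where
  "covered \<T> = (\<Union>K\<in>\<T>. copy_verts K)"

end

theory Submission
  imports Defs
begin

text \<open>Every edge \<open>{i, j, l}\<close> of the cluster hypergraph is given disjoint pieces of the clusters
  \<open>V\<^sub>i, V\<^sub>j, V\<^sub>l\<close> of sizes \<open>\<lfloor>h(i,e)m\<rfloor>, \<lfloor>h(j,e)m\<rfloor>, \<lfloor>h(l,e)m\<rfloor>\<close>, where \<open>m = |V\<^sub>i|\<close>. The labelling
  condition on \<open>h\<close> keeps each piece between an \<open>a/(a+b+c)\<close> and a \<open>c/(a+b+c)\<close> fraction of the
  total, and this balance survives greedily removing copies of \<open>K\<close> whose largest part is taken
  from the largest remaining piece. Removal is possible as long as every piece has \<open>\<epsilon>m + N\<close>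
  vertices: by regularity any three such sets span an \<open>\<epsilon>\<close>-dense 3-partite subgraph, which
  contains \<open>K\<^sub>c\<^sub>,\<^sub>c\<^sub>,\<^sub>c\<close> by Erdos' theorem. The \<open>O(\<epsilon>m)\<close> vertices left over per edge are at most a
  \<open>2bc\<^sup>3\<epsilon>\<close> fraction of its weight because \<open>h\<^sub>m\<^sub>i\<^sub>n \<ge> 1/(bc\<^sup>2)\<close>.\<close>

section \<open>Complete tripartite subgraphs of dense 3-partite 3-graphs\<close>

lemma card_pairs_eq_sum:
  assumes "finite A" "finite B"
  shows "card {(x, y). x \<in> A \<and> y \<in> B \<and> P x y} = (\<Sum>y\<in>B. card {x\<in>A. P x y})"
proof -
  have "{(x, y). x \<in> A \<and> y \<in> B \<and> P x y} = (\<Union>y\<in>B. (\<lambda>x. (x, y)) ` {x\<in>A. P x y})"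
    by auto
  also have "card \<dots> = (\<Sum>y\<in>B. card ((\<lambda>x. (x, y)) ` {x\<in>A. P x y}))"
    using assms by (intro card_UN_disjoint) auto
  also have "\<dots> = (\<Sum>y\<in>B. card {x\<in>A. P x y})"
    by (intro sum.cong refl card_image) (auto simp: inj_on_def)
  finally show ?thesis .
qed

lemma card_large_values_ge:
  fixes f :: "'b \<Rightarrow> real"
  assumes "finite T" "0 \<le> p" "0 < M" "\<And>\<tau>. \<tau> \<in> T \<Longrightarrow> f \<tau> \<le> M"
    and "p * M * card T \<le> (\<Sum>\<tau>\<in>T. f \<tau>)"
  shows "p / 2 * card T \<le> card {\<tau>\<in>T. p * M / 2 \<le> f \<tau>}"
proof -
  define T' where "T' = {\<tau>\<in>T. p * M / 2 \<le> f \<tau>}"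
  have "T' \<subseteq> T" "finite T'" using assms(1) by (auto simp: T'_def)
  have "(\<Sum>\<tau>\<in>T. f \<tau>) = (\<Sum>\<tau>\<in>T'. f \<tau>) + (\<Sum>\<tau>\<in>T - T'. f \<tau>)"
    using assms(1) \<open>T' \<subseteq> T\<close> by (metis sum.subset_diff add.commute)
  also have "\<dots> \<le> card T' * M + card (T - T') * (p * M / 2)"
    using assms(4) \<open>T' \<subseteq> T\<close> by (intro add_mono sum_bounded_above) (auto simp: T'_def)
  also have "\<dots> \<le> card T' * M + card T * (p * M / 2)"
    using assms(1-3) by (intro add_left_mono mult_right_mono) (auto intro: card_mono)
  finally have "p / 2 * card T * M \<le> card T' * M"
    using assms(5) by (simp add: algebra_simps)
  then show ?thesis using assms(3) by (simp add: T'_def)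
qed

lemma sum_card_supersets_eq_sum_choose:
  assumes "finite S" "finite T" "\<And>\<tau>. \<tau> \<in> T \<Longrightarrow> L \<tau> \<subseteq> S"
  shows "(\<Sum>K\<in>{K. K \<subseteq> S \<and> card K = k}. card {\<tau>\<in>T. K \<subseteq> L \<tau>}) = (\<Sum>\<tau>\<in>T. card (L \<tau>) choose k)"
proof -
  have fin: "finite {K. K \<subseteq> S \<and> card K = k}" using assms(1) by simp
  have "(\<Sum>K\<in>{K. K \<subseteq> S \<and> card K = k}. card {\<tau>\<in>T. K \<subseteq> L \<tau>})
      = (\<Sum>K\<in>{K. K \<subseteq> S \<and> card K = k}. \<Sum>\<tau>\<in>T. if K \<subseteq> L \<tau> then 1 else 0)"
    using assms(2) by (simp add: sum.If_cases Int_def)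
  also have "\<dots> = (\<Sum>\<tau>\<in>T. \<Sum>K\<in>{K. K \<subseteq> S \<and> card K = k}. if K \<subseteq> L \<tau> then 1 else 0)"
    by (rule sum.swap)
  also have "\<dots> = (\<Sum>\<tau>\<in>T. card (L \<tau>) choose k)"
  proof (rule sum.cong[OF refl])
    fix \<tau> assume "\<tau> \<in> T"
    then have "{K \<in> {K. K \<subseteq> S \<and> card K = k}. K \<subseteq> L \<tau>} = {K. K \<subseteq> L \<tau> \<and> card K = k}"
      "finite (L \<tau>)"
      using assms(1,3) by (auto intro: finite_subset)
    then show "(\<Sum>K\<in>{K. K \<subseteq> S \<and> card K = k}. if K \<subseteq> L \<tau> then 1 else 0) = card (L \<tau>) choose k"
      using fin by (simp add: sum.If_cases Int_def n_subsets)
  qed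
  finally show ?thesis .
qed

text \<open>The counting step of the Kovari-Sos-Turan argument.\<close>
lemma common_subset_of_dense_family:
  fixes p :: real
  assumes p: "0 < p" "p \<le> 1" and k: "1 \<le> k" and S: "finite S" "2 * k / p \<le> card S"
    and T: "finite T" and L: "\<And>\<tau>. \<tau> \<in> T \<Longrightarrow> L \<tau> \<subseteq> S"
    and dense: "p * card S * card T \<le> (\<Sum>\<tau>\<in>T. real (card (L \<tau>)))"
  obtains K where "K \<subseteq> S" "card K = k" "p / 2 * (p / (2 * k)) ^ k * card T \<le> card {\<tau>\<in>T. K \<subseteq> L \<tau>}"
proof -
  define T' where "T' = {\<tau>\<in>T. p * card S / 2 \<le> card (L \<tau>)}"
  define x where "x = p * card S / (2 * k)"
  define Ks where "Ks = {K. K \<subseteq> S \<and> card K = k}"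
  define q where "q = p / 2 * (p / (2 * k)) ^ k * card T"
  have "2 * k \<le> 2 * k / p" using p k by (simp add: field_simps)
  then have kS: "k \<le> card S" using S by linarith
  have x1: "1 \<le> x" using S p k by (simp add: x_def field_simps)
  have "card S > 0" using kS k by linarith
  then have T'big: "p / 2 * card T \<le> card T'"
    unfolding T'_def using p L S
    by (intro card_large_values_ge[OF T _ _ _ dense]) (auto intro: card_mono)
  have "x ^ k \<le> card (L \<tau>) choose k" if "\<tau> \<in> T'" for \<tau>
  proof -
    have "k \<le> card (L \<tau>)"
      using that S p by (simp add: T'_def field_simps)
    have "x \<le> card (L \<tau>) / k" using that k by (simp add: T'_def x_def field_simps)
    then have "x ^ k \<le> (card (L \<tau>) / k) ^ k" using x1 by (intro power_mono) auto
    also have "\<dots> \<le> card (L \<tau>) choose k" by (rule binomial_ge_n_over_k_pow_k) fact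
    finally show ?thesis .
  qed
  then have "card T' * x ^ k \<le> (\<Sum>\<tau>\<in>T'. real (card (L \<tau>) choose k))"
    by (metis sum_bounded_below)
  also have "\<dots> \<le> (\<Sum>\<tau>\<in>T. real (card (L \<tau>) choose k))"
    using T by (intro sum_mono2) (auto simp: T'_def)
  also have "\<dots> = (\<Sum>K\<in>Ks. real (card {\<tau>\<in>T. K \<subseteq> L \<tau>}))"
    by (simp add: Ks_def sum_card_supersets_eq_sum_choose[OF S(1) T L] flip: of_nat_sum)
  finally have upper: "card T' * x ^ k \<le> (\<Sum>K\<in>Ks. real (card {\<tau>\<in>T. K \<subseteq> L \<tau>}))" .
  have "card Ks = card S choose k" using S by (simp add: Ks_def n_subsets)
  then have "q * card Ks \<le> q * real (card S) ^ k"
    using binomial_le_pow[OF kS] p unfolding q_def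
    by (intro mult_left_mono) (simp_all flip: of_nat_power)
  also have "\<dots> = p / 2 * card T * x ^ k"
    by (simp add: q_def x_def power_mult_distrib power_divide)
  also have "\<dots> \<le> card T' * x ^ k"
    using T'big x1 by (intro mult_right_mono) auto
  finally have avg: "q * card Ks \<le> (\<Sum>K\<in>Ks. real (card {\<tau>\<in>T. K \<subseteq> L \<tau>}))"
    using upper by linarith
  have "Ks \<noteq> {}" using kS obtain_subset_with_card_n unfolding Ks_def by blast
  then have "card Ks > 0" using S by (simp add: Ks_def card_gt_0_iff)
  then obtain K where "K \<in> Ks" "q \<le> card {\<tau>\<in>T. K \<subseteq> L \<tau>}"
    using avg sum_bounded_above_strict[of Ks "\<lambda>K. real (card {\<tau>\<in>T. K \<subseteq> L \<tau>})" q]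
    by (force simp: mult.commute)
  then show ?thesis using that by (auto simp: Ks_def q_def)
qed

lemma dense_bipartite_complete_subgraph:
  fixes p :: real
  assumes p: "0 < p" "p \<le> 1" and k2: "1 \<le> k2" and fin: "finite A2" "finite A3"
    and A2: "2 * k2 / p \<le> card A2" and A3: "k3 / (p / 2 * (p / (2 * k2)) ^ k2) \<le> card A3"
    and dense: "p * card A2 * card A3 \<le> card {(y, z). y \<in> A2 \<and> z \<in> A3 \<and> R y z}"
  obtains Y Z where "Y \<subseteq> A2" "Z \<subseteq> A3" "card Y = k2" "card Z = k3" "\<forall>y\<in>Y. \<forall>z\<in>Z. R y z"
proof -
  define q where "q = p / 2 * (p / (2 * k2)) ^ k2"
  have "p * card A2 * card A3 \<le> (\<Sum>z\<in>A3. real (card {y\<in>A2. R y z}))"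
    using dense by (simp add: card_pairs_eq_sum[OF fin])
  then obtain Y where Y: "Y \<subseteq> A2" "card Y = k2"
    and many: "q * card A3 \<le> card {z\<in>A3. Y \<subseteq> {y\<in>A2. R y z}}"
    using common_subset_of_dense_family[OF p k2 fin(1) A2 fin(2), of "\<lambda>z. {y\<in>A2. R y z}"]
    unfolding q_def by auto
  have "q > 0" using p k2 by (simp add: q_def)
  then have "k3 \<le> q * card A3" using A3 by (simp add: q_def divide_le_eq mult.commute)
  then have "k3 \<le> card {z\<in>A3. Y \<subseteq> {y\<in>A2. R y z}}" using many by linarith
  then obtain Z where "Z \<subseteq> {z\<in>A3. Y \<subseteq> {y\<in>A2. R y z}}" "card Z = k3"
    by (meson obtain_subset_with_card_n)
  with Y show ?thesis using that by blast
qed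

text \<open>Erdos' theorem on complete tripartite subhypergraphs of dense 3-partite 3-graphs.\<close>
lemma dense_tripartite_complete_subgraph:
  fixes p :: real
  assumes p: "0 < p" "p \<le> 1" and k: "1 \<le> k1" "1 \<le> k2"
  obtains N :: nat where
    "\<And>(A1::'a set) (A2::'a set) (A3::'a set) Q. finite A1 \<Longrightarrow> finite A2 \<Longrightarrow> finite A3 \<Longrightarrow>
       N \<le> card A1 \<Longrightarrow> N \<le> card A2 \<Longrightarrow> N \<le> card A3 \<Longrightarrow>
       p * card A1 * card A2 * card A3 \<le> card {(x, y, z). x \<in> A1 \<and> y \<in> A2 \<and> z \<in> A3 \<and> Q x y z} \<Longrightarrow>
       \<exists>X\<subseteq>A1. \<exists>Y\<subseteq>A2. \<exists>Z\<subseteq>A3. card X = k1 \<and> card Y = k2 \<and> card Z = k3 \<and>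
         (\<forall>x\<in>X. \<forall>y\<in>Y. \<forall>z\<in>Z. Q x y z)"
proof -
  define q where "q = p / 2 * (p / (2 * real k1)) ^ k1"
  have q: "0 < q" "q \<le> 1"
  proof -
    have "p / (2 * k1) \<le> 1" using p k by (simp add: field_simps)
    then have "(p / (2 * real k1)) ^ k1 \<le> 1" using p by (simp add: power_le_one)
    then show "q \<le> 1" using p unfolding q_def by (intro mult_le_one) auto
  qed (use p k in \<open>simp add: q_def\<close>)
  define N where "N = nat \<lceil>max (2 * real k1 / p) (max (2 * real k2 / q) (real k3 / (q / 2 * (q / (2 * real k2)) ^ k2)))\<rceil>"
  show ?thesis
  proof (rule that)
    fix A1 A2 A3 :: "'a set" and Q
    assume fin: "finite A1" "finite A2" "finite A3"
      and N: "N \<le> card A1" "N \<le> card A2" "N \<le> card A3"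
      and dense: "p * card A1 * card A2 * card A3 \<le> card {(x, y, z). x \<in> A1 \<and> y \<in> A2 \<and> z \<in> A3 \<and> Q x y z}"
    have "max (2 * real k1 / p) (max (2 * real k2 / q) (real k3 / (q / 2 * (q / (2 * real k2)) ^ k2))) \<le> N"
      unfolding N_def by (rule real_nat_ceiling_ge)
    moreover have "real N \<le> card A1" "real N \<le> card A2" "real N \<le> card A3" using N by simp_all
    ultimately have A1: "2 * real k1 / p \<le> card A1" and A2: "2 * real k2 / q \<le> card A2"
      and A3: "real k3 / (q / 2 * (q / (2 * real k2)) ^ k2) \<le> card A3"
      by simp_all
    define T where "T = A2 \<times> A3"
    define L where "L \<tau> = {x\<in>A1. Q x (fst \<tau>) (snd \<tau>)}" for \<tau>
    have fT: "finite T" "card T = card A2 * card A3"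
      using fin by (simp_all add: T_def card_cartesian_product)
    have "{(x, y, z). x \<in> A1 \<and> y \<in> A2 \<and> z \<in> A3 \<and> Q x y z}
        = {(x, \<tau>). x \<in> A1 \<and> \<tau> \<in> T \<and> Q x (fst \<tau>) (snd \<tau>)}"
      by (auto simp: T_def)
    then have "p * card A1 * card T \<le> (\<Sum>\<tau>\<in>T. real (card (L \<tau>)))"
      using dense fT card_pairs_eq_sum[OF fin(1) fT(1), of "\<lambda>x \<tau>. Q x (fst \<tau>) (snd \<tau>)"]
      by (simp add: L_def mult.assoc)
    then obtain X where X: "X \<subseteq> A1" "card X = k1" and many: "q * card T \<le> card {\<tau>\<in>T. X \<subseteq> L \<tau>}"
      using common_subset_of_dense_family[OF p k(1) fin(1) A1 fT(1), of L]
      unfolding q_def by (auto simp: L_def)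
    have "{\<tau>\<in>T. X \<subseteq> L \<tau>} = {(y, z). y \<in> A2 \<and> z \<in> A3 \<and> (\<forall>x\<in>X. Q x y z)}"
      using X by (auto simp: T_def L_def)
    then have "q * card A2 * card A3 \<le> card {(y, z). y \<in> A2 \<and> z \<in> A3 \<and> (\<forall>x\<in>X. Q x y z)}"
      using many fT by (simp add: mult.assoc)
    then obtain Y Z where "Y \<subseteq> A2" "Z \<subseteq> A3" "card Y = k2" "card Z = k3"
      "\<forall>y\<in>Y. \<forall>z\<in>Z. \<forall>x\<in>X. Q x y z"
      by (rule dense_bipartite_complete_subgraph[OF q k(2) fin(2,3) A2 A3])
    with X show "\<exists>X\<subseteq>A1. \<exists>Y\<subseteq>A2. \<exists>Z\<subseteq>A3. card X = k1 \<and> card Y = k2 \<and> card Z = k3 \<and>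
         (\<forall>x\<in>X. \<forall>y\<in>Y. \<forall>z\<in>Z. Q x y z)"
      by (intro exI[of _ X] conjI exI[of _ Y] exI[of _ Z]) simp_all
  qed
qed

section \<open>Greedy tiling of balanced triples\<close>

definition orientations :: "nat \<Rightarrow> nat \<Rightarrow> nat \<Rightarrow> (nat \<times> nat \<times> nat) set" where
  "orientations a b c = {(a, b, c), (a, c, b), (b, a, c), (b, c, a), (c, a, b), (c, b, a)}"

definition complete_triple :: "'a set set \<Rightarrow> 'a set \<Rightarrow> 'a set \<Rightarrow> 'a set \<Rightarrow> bool" where
  "complete_triple E X Y Z \<longleftrightarrow> (\<forall>x\<in>X. \<forall>y\<in>Y. \<forall>z\<in>Z. {x, y, z} \<in> E)"

text \<open>Removing a copy of
  \<open>K\<^sub>a\<^sub>,\<^sub>b\<^sub>,\<^sub>c\<close> whose largest part goes to the largest set preserves this.\<close>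
definition balanced :: "real \<Rightarrow> real \<Rightarrow> real \<Rightarrow> real \<Rightarrow> real \<Rightarrow> real \<Rightarrow> bool" where
  "balanced a b c r1 r2 r3 \<longleftrightarrow>
    (\<forall>x\<in>{r1, r2, r3}. a * (r1 + r2 + r3) \<le> (a + b + c) * (x + 2 * c) \<and>
                       (a + b + c) * x \<le> c * (r1 + r2 + r3) + (a + b + c) * (2 * c))"

lemma balanced_swap:
  "balanced a b c r1 r2 r3 \<Longrightarrow> balanced a b c r2 r1 r3"
  "balanced a b c r1 r2 r3 \<Longrightarrow> balanced a b c r1 r3 r2"
  "balanced a b c r1 r2 r3 \<Longrightarrow> balanced a b c r3 r2 r1"
  unfolding balanced_def by (auto simp: algebra_simps)

lemma balanced_remove_sorted:
  assumes abc: "0 < a" "a \<le> b" "b \<le> c" and r: "0 \<le> r1" "r1 \<le> r2" "r2 \<le> r3"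
    and bal: "balanced a b c r1 r2 r3"
  shows "balanced a b c (r1 - a) (r2 - b) (r3 - c)"
proof -
  from bal have h1: "a * (r1 + r2 + r3) \<le> (a + b + c) * (r1 + 2 * c)"
    and h3: "(a + b + c) * r3 \<le> c * (r1 + r2 + r3) + (a + b + c) * (2 * c)"
    unfolding balanced_def by auto
  have mono: "a * r1 \<le> a * r2" "a * r2 \<le> a * r3" "b * r1 \<le> b * r2" "b * r2 \<le> b * r3"
    "c * r1 \<le> c * r2" "c * r2 \<le> c * r3" "a * r1 \<le> b * r1" "b * r1 \<le> c * r1"
    "a * r2 \<le> b * r2" "b * r2 \<le> c * r2" "a * r3 \<le> b * r3" "b * r3 \<le> c * r3"
    using abc r by (auto intro!: mult_left_mono mult_right_mono)
  have pos: "0 \<le> (a + b + c) * (c + a - b)" "0 \<le> (a + b + c) * (a + c)" "0 \<le> (a + b + c) * b"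
    "0 \<le> a * c" "0 \<le> b * c" "0 \<le> c * c" "0 \<le> a * a" "0 \<le> a * b" "0 \<le> b * b"
    using abc by auto
  have "a * (r1 - a + r2 - b + r3 - c) \<le> (a + b + c) * (r1 - a + 2 * c)"
    using h1 h3 mono pos by (simp add: algebra_simps, (linarith)?)
  moreover have "a * (r1 - a + r2 - b + r3 - c) \<le> (a + b + c) * (r2 - b + 2 * c)"
    using h1 h3 mono pos by (simp add: algebra_simps, (linarith)?)
  moreover have "a * (r1 - a + r2 - b + r3 - c) \<le> (a + b + c) * (r3 - c + 2 * c)"
    using h1 h3 mono pos by (simp add: algebra_simps, (linarith)?)
  moreover have "(a + b + c) * (r1 - a) \<le> c * (r1 - a + r2 - b + r3 - c) + (a + b + c) * (2 * c)"
    using h1 h3 mono pos by (simp add: algebra_simps, (linarith)?)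
  moreover have "(a + b + c) * (r2 - b) \<le> c * (r1 - a + r2 - b + r3 - c) + (a + b + c) * (2 * c)"
    using h1 h3 mono pos by (simp add: algebra_simps, (linarith)?)
  moreover have "(a + b + c) * (r3 - c) \<le> c * (r1 - a + r2 - b + r3 - c) + (a + b + c) * (2 * c)"
    using h1 h3 mono pos by (simp add: algebra_simps, (linarith)?)
  ultimately show ?thesis unfolding balanced_def by (simp add: algebra_simps)
qed

lemma balanced_remove_orientation:
  fixes a b c :: nat
  assumes abc: "0 < a" "a \<le> b" "b \<le> c" and r: "0 \<le> r1" "0 \<le> r2" "0 \<le> r3"
    and bal: "balanced a b c r1 r2 r3"
  obtains q1 q2 q3 where "(q1, q2, q3) \<in> orientations a b c" "balanced a b c (r1 - q1) (r2 - q2) (r3 - q3)"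
proof -
  have abc': "0 < real a" "real a \<le> real b" "real b \<le> real c" using abc by auto
  note remove = balanced_remove_sorted[OF abc'] and swap = balanced_swap
  consider "r1 \<le> r2" "r2 \<le> r3" | "r1 \<le> r3" "r3 \<le> r2" | "r2 \<le> r1" "r1 \<le> r3"
    | "r2 \<le> r3" "r3 \<le> r1" | "r3 \<le> r1" "r1 \<le> r2" | "r3 \<le> r2" "r2 \<le> r1" by linarith
  then show ?thesis
  proof cases
    case 1
    then show ?thesis using that[of a b c] remove[OF r(1) 1 bal] by (simp add: orientations_def)
  next
    case 2
    then show ?thesis using that[of a c b] swap(2)[OF remove[OF r(1) 2 swap(2)[OF bal]]]
      by (simp add: orientations_def)
  next
    case 3
    then show ?thesis using that[of b a c] swap(1)[OF remove[OF r(2) 3 swap(1)[OF bal]]]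
      by (simp add: orientations_def)
  next
    case 4
    then show ?thesis
      using that[of c a b] swap(2)[OF swap(3)[OF remove[OF r(2) 4 swap(2)[OF swap(1)[OF bal]]]]]
      by (simp add: orientations_def)
  next
    case 5
    then show ?thesis
      using that[of b c a] swap(2)[OF swap(1)[OF remove[OF r(3) 5 swap(1)[OF swap(2)[OF bal]]]]]
      by (simp add: orientations_def)
  next
    case 6
    then show ?thesis using that[of c b a] swap(3)[OF remove[OF r(3) 6 swap(3)[OF bal]]]
      by (simp add: orientations_def)
  qed
qed

lemma K_copy_of_complete_triple:
  assumes "X1 \<subseteq> V" "X2 \<subseteq> V" "X3 \<subseteq> V" "X1 \<inter> X2 = {}" "X2 \<inter> X3 = {}" "X1 \<inter> X3 = {}"
    and "(card X1, card X2, card X3) \<in> orientations a b c" and "complete_triple E X1 X2 X3"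
  obtains K where "K_copy a b c V E K" "copy_verts K = X1 \<union> X2 \<union> X3"
proof -
  have edges: "{x, y, z} \<in> E \<and> {x, z, y} \<in> E \<and> {y, x, z} \<in> E \<and> {y, z, x} \<in> E \<and> {z, x, y} \<in> E \<and> {z, y, x} \<in> E"
    if "x \<in> X1" "y \<in> X2" "z \<in> X3" for x y z
    using assms(8) that unfolding complete_triple_def by (simp add: insert_commute)
  have disj': "X2 \<inter> X1 = {}" "X3 \<inter> X2 = {}" "X3 \<inter> X1 = {}" using assms(4-6) by blast+
  from assms(7) consider "(card X1, card X2, card X3) = (a, b, c)" | "(card X1, card X2, card X3) = (a, c, b)"
    | "(card X1, card X2, card X3) = (b, a, c)" | "(card X1, card X2, card X3) = (b, c, a)"
    | "(card X1, card X2, card X3) = (c, a, b)" | "(card X1, card X2, card X3) = (c, b, a)"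
    unfolding orientations_def by blast
  then show ?thesis
  proof cases
    case 1
    then show ?thesis using that[of "(X1, X2, X3)"] assms(1-6) disj' edges
      by (auto simp: K_copy_def copy_verts_def Un_ac)
  next
    case 2
    then show ?thesis using that[of "(X1, X3, X2)"] assms(1-6) disj' edges
      by (auto simp: K_copy_def copy_verts_def Un_ac)
  next
    case 3
    then show ?thesis using that[of "(X2, X1, X3)"] assms(1-6) disj' edges
      by (auto simp: K_copy_def copy_verts_def Un_ac)
  next
    case 4
    then show ?thesis using that[of "(X3, X1, X2)"] assms(1-6) disj' edges
      by (auto simp: K_copy_def copy_verts_def Un_ac)
  next
    case 5
    then show ?thesis using that[of "(X2, X3, X1)"] assms(1-6) disj' edges
      by (auto simp: K_copy_def copy_verts_def Un_ac)
  next
    case 6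
    then show ?thesis using that[of "(X3, X2, X1)"] assms(1-6) disj' edges
      by (auto simp: K_copy_def copy_verts_def Un_ac)
  qed
qed

lemma covered_empty [simp]: "covered {} = {}"
  and covered_insert [simp]: "covered (insert K T) = copy_verts K \<union> covered T"
  and covered_UN [simp]: "covered (\<Union>i\<in>I. F i) = (\<Union>i\<in>I. covered (F i))"
  by (auto simp: covered_def)

lemma K_tiling_empty [simp]: "K_tiling a b c V E {}"
  by (simp add: K_tiling_def)

lemma covered_subset_if_K_tiling:
  assumes "K_tiling a b c V E T"
  shows "covered T \<subseteq> V"
  using assms by (force simp: K_tiling_def K_copy_def copy_verts_def covered_def)

lemma K_tiling_UN:
  assumes "\<And>i. i \<in> I \<Longrightarrow> K_tiling a b c V E (T i)"
    and "\<And>i j. i \<in> I \<Longrightarrow> j \<in> I \<Longrightarrow> i \<noteq> j \<Longrightarrow> covered (T i) \<inter> covered (T j) = {}"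
  shows "K_tiling a b c V E (\<Union>i\<in>I. T i)"
  unfolding K_tiling_def
proof (intro conjI ballI impI)
  fix K assume "K \<in> (\<Union>i\<in>I. T i)"
  then show "K_copy a b c V E K" using assms(1) by (auto simp: K_tiling_def)
next
  fix K K' assume K: "K \<in> (\<Union>i\<in>I. T i)" and K': "K' \<in> (\<Union>i\<in>I. T i)" and "K \<noteq> K'"
  then obtain i j where "i \<in> I" "j \<in> I" "K \<in> T i" "K' \<in> T j" by blast
  moreover have "copy_verts K \<subseteq> covered (T i)" "copy_verts K' \<subseteq> covered (T j)"
    using \<open>K \<in> T i\<close> \<open>K' \<in> T j\<close> by (auto simp: covered_def)
  ultimately show "copy_verts K \<inter> copy_verts K' = {}"
    using assms \<open>K \<noteq> K'\<close> unfolding K_tiling_def by (cases "i = j") blast+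
qed

lemma K_tiling_Un:
  assumes "K_tiling a b c V E T1" "K_tiling a b c V E T2" "covered T1 \<inter> covered T2 = {}"
  shows "K_tiling a b c V E (T1 \<union> T2)"
  unfolding K_tiling_def
proof (intro conjI ballI impI)
  fix K assume "K \<in> T1 \<union> T2"
  then show "K_copy a b c V E K" using assms(1,2) by (auto simp: K_tiling_def)
next
  fix K K' assume K: "K \<in> T1 \<union> T2" and K': "K' \<in> T1 \<union> T2" and "K \<noteq> K'"
  have sub: "copy_verts L \<subseteq> covered T" if "L \<in> T" for L T using that by (auto simp: covered_def)
  from K K' consider "K \<in> T1" "K' \<in> T1" | "K \<in> T2" "K' \<in> T2" | "K \<in> T1" "K' \<in> T2" | "K \<in> T2" "K' \<in> T1"
    by blast
  then show "copy_verts K \<inter> copy_verts K' = {}"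
  proof cases
    case 1
    then show ?thesis using assms(1) \<open>K \<noteq> K'\<close> by (simp add: K_tiling_def)
  next
    case 2
    then show ?thesis using assms(2) \<open>K \<noteq> K'\<close> by (simp add: K_tiling_def)
  next
    case 3
    then show ?thesis using sub[of K T1] sub[of K' T2] assms(3) by blast
  next
    case 4
    then show ?thesis using sub[of K T2] sub[of K' T1] assms(3) by blast
  qed
qed

lemma K_tiling_insert:
  assumes "K_tiling a b c V E T" "K_copy a b c V E K" "copy_verts K \<inter> covered T = {}"
  shows "K_tiling a b c V E (insert K T)"
proof -
  have "K_tiling a b c V E {K}" using assms(2) by (simp add: K_tiling_def)
  then show ?thesis using K_tiling_Un[of a b c V E "{K}" T] assms(1,3) by (simp add: covered_def)
qed

definition K_rich :: "nat \<Rightarrow> nat \<Rightarrow> nat \<Rightarrow> 'a set set \<Rightarrow> real \<Rightarrow> 'a set \<Rightarrow> 'a set \<Rightarrow> 'a set \<Rightarrow> bool" where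
  "K_rich a b c E \<theta> U1 U2 U3 \<longleftrightarrow>
     (\<forall>A1\<subseteq>U1. \<forall>A2\<subseteq>U2. \<forall>A3\<subseteq>U3. \<theta> \<le> card A1 \<and> \<theta> \<le> card A2 \<and> \<theta> \<le> card A3 \<longrightarrow>
        (\<forall>q\<in>orientations a b c. \<exists>X1\<subseteq>A1. \<exists>X2\<subseteq>A2. \<exists>X3\<subseteq>A3.
           (card X1, card X2, card X3) = q \<and> complete_triple E X1 X2 X3))"

lemma K_rich_subset:
  assumes "K_rich a b c E \<theta> U1 U2 U3" "A1 \<subseteq> U1" "A2 \<subseteq> U2" "A3 \<subseteq> U3"
  shows "K_rich a b c E \<theta> A1 A2 A3"
  unfolding K_rich_def
proof (intro allI impI)
  fix B1 B2 B3 assume "B1 \<subseteq> A1" "B2 \<subseteq> A2" "B3 \<subseteq> A3" "\<theta> \<le> card B1 \<and> \<theta> \<le> card B2 \<and> \<theta> \<le> card B3"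
  moreover have "B1 \<subseteq> U1" "B2 \<subseteq> U2" "B3 \<subseteq> U3"
    using assms(2-4) \<open>B1 \<subseteq> A1\<close> \<open>B2 \<subseteq> A2\<close> \<open>B3 \<subseteq> A3\<close> by auto
  ultimately show "\<forall>q\<in>orientations a b c. \<exists>X1\<subseteq>B1. \<exists>X2\<subseteq>B2. \<exists>X3\<subseteq>B3.
      (card X1, card X2, card X3) = q \<and> complete_triple E X1 X2 X3"
    using assms(1)[unfolded K_rich_def, rule_format, of B1 B2 B3] by auto
qed

lemma greedy_K_tiling:
  fixes a b c :: nat and \<theta> :: real
  assumes abc: "0 < a" "a \<le> b" "b \<le> c"
    and V: "A1 \<subseteq> V" "A2 \<subseteq> V" "A3 \<subseteq> V" "finite V"
    and disj: "A1 \<inter> A2 = {}" "A2 \<inter> A3 = {}" "A1 \<inter> A3 = {}"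
    and rich: "K_rich a b c E \<theta> A1 A2 A3"
    and bal: "balanced a b c (card A1) (card A2) (card A3)"
  shows "\<exists>T. K_tiling a b c V E T \<and> covered T \<subseteq> A1 \<union> A2 \<union> A3 \<and>
      card A1 + card A2 + card A3 - (a + b + c) * (\<theta> + 2 * c) / a \<le> card (covered T)"
  using V disj rich bal
proof (induction "card A1 + card A2 + card A3" arbitrary: A1 A2 A3 rule: less_induct)
  case less
  have fin: "finite A1" "finite A2" "finite A3" using less.prems(1-4) by (auto intro: finite_subset)
  define S where "S = real (card A1) + real (card A2) + real (card A3)"
  show ?case
  proof (cases "card A1 < \<theta> \<or> card A2 < \<theta> \<or> card A3 < \<theta>")
    case True
    then obtain x where "x \<in> {real (card A1), real (card A2), real (card A3)}" "x < \<theta>" by blast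
    then have "a * S \<le> (real a + real b + real c) * (x + 2 * real c)"
      using less.prems(9) unfolding balanced_def S_def by blast
    also have "\<dots> \<le> (real a + real b + real c) * (\<theta> + 2 * real c)"
      using \<open>x < \<theta>\<close> by (intro mult_left_mono) auto
    finally have "S \<le> (a + b + c) * (\<theta> + 2 * c) / a"
      using abc by (simp add: field_simps)
    then show ?thesis by (intro exI[of _ "{}"]) (simp add: S_def)
  next
    case False
    obtain q1 q2 q3 where q: "(q1, q2, q3) \<in> orientations a b c"
      and bal': "balanced a b c (real (card A1) - q1) (real (card A2) - q2) (real (card A3) - q3)"
      using balanced_remove_orientation[OF abc _ _ _ less.prems(9)] by auto
    have "\<theta> \<le> card A1 \<and> \<theta> \<le> card A2 \<and> \<theta> \<le> card A3" using False by auto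
    then obtain X1 X2 X3 where X: "X1 \<subseteq> A1" "X2 \<subseteq> A2" "X3 \<subseteq> A3"
      and card_X: "card X1 = q1" "card X2 = q2" "card X3 = q3" and complete: "complete_triple E X1 X2 X3"
      using less.prems(8)[unfolded K_rich_def, rule_format, OF subset_refl subset_refl subset_refl _ q]
      by auto
    have fX: "finite X1" "finite X2" "finite X3" using X fin by (auto intro: finite_subset)
    have disj_X: "X1 \<inter> X2 = {}" "X2 \<inter> X3 = {}" "X1 \<inter> X3 = {}" using X less.prems(5-7) by blast+
    have sum_q: "q1 + q2 + q3 = a + b + c" using q by (auto simp: orientations_def)
    then have card_KX: "card (X1 \<union> X2 \<union> X3) = a + b + c"
      using fX disj_X card_X by (simp add: card_Un_disjoint Int_Un_distrib2)
    have XV: "X1 \<subseteq> V" "X2 \<subseteq> V" "X3 \<subseteq> V" using X less.prems(1-3) by auto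
    have "(card X1, card X2, card X3) \<in> orientations a b c" using q card_X by simp
    then obtain K where K: "K_copy a b c V E K" "copy_verts K = X1 \<union> X2 \<union> X3"
      by (rule K_copy_of_complete_triple[OF XV disj_X _ complete])
    define A1' A2' A3' where "A1' = A1 - X1" and "A2' = A2 - X2" and "A3' = A3 - X3"
    have card_A': "card A1' = card A1 - q1" "card A2' = card A2 - q2" "card A3' = card A3 - q3"
      "q1 \<le> card A1" "q2 \<le> card A2" "q3 \<le> card A3"
      using X fX fin card_X by (auto simp: A1'_def A2'_def A3'_def card_Diff_subset card_mono)
    have "card A1' + card A2' + card A3' < card A1 + card A2 + card A3"
      using card_A' sum_q abc by linarith
    moreover have "A1' \<subseteq> V" "A2' \<subseteq> V" "A3' \<subseteq> V" "A1' \<inter> A2' = {}" "A2' \<inter> A3' = {}" "A1' \<inter> A3' = {}"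
      using less.prems(1-7) by (auto simp: A1'_def A2'_def A3'_def)
    moreover have "K_rich a b c E \<theta> A1' A2' A3'"
      using K_rich_subset[OF less.prems(8)] by (auto simp: A1'_def A2'_def A3'_def)
    moreover have "balanced a b c (card A1') (card A2') (card A3')"
      using bal' card_A' by (simp add: of_nat_diff)
    ultimately obtain T where T: "K_tiling a b c V E T" "covered T \<subseteq> A1' \<union> A2' \<union> A3'"
      and cov: "card A1' + card A2' + card A3' - (a + b + c) * (\<theta> + 2 * c) / a \<le> card (covered T)"
      using less.hyps less.prems(4) by blast
    have disj_K: "copy_verts K \<inter> covered T = {}"
      using K(2) T(2) X less.prems(5-7) unfolding A1'_def A2'_def A3'_def by blast
    have "finite (covered T)"
      using covered_subset_if_K_tiling[OF T(1)] less.prems(4) by (rule finite_subset)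
    then have "card (covered (insert K T)) = a + b + c + card (covered T)"
      using disj_K K(2) card_KX fX by (simp add: card_Un_disjoint)
    moreover have "real (card A1' + card A2' + card A3') = S - (real a + real b + real c)"
      using card_A' sum_q by (simp add: S_def of_nat_diff)
    moreover have "covered (insert K T) \<subseteq> A1 \<union> A2 \<union> A3"
      using K(2) T(2) X by (auto simp: A1'_def A2'_def A3'_def)
    ultimately show ?thesis
      using K_tiling_insert[OF T(1) K(1) disj_K] cov
      by (intro exI[of _ "insert K T"]) (simp add: S_def)
  qed
qed

section \<open>Regular triples\<close>

definition triple_count :: "'a set set \<Rightarrow> 'a set \<Rightarrow> 'a set \<Rightarrow> 'a set \<Rightarrow> nat" where
  "triple_count E X Y Z = card {(x, y, z). x \<in> X \<and> y \<in> Y \<and> z \<in> Z \<and> {x, y, z} \<in> E}"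

lemma finite_edge_triples:
  "finite X \<Longrightarrow> finite Y \<Longrightarrow> finite Z \<Longrightarrow> finite {(x, y, z). x \<in> X \<and> y \<in> Y \<and> z \<in> Z \<and> {x, y, z} \<in> E}"
  by (rule finite_subset[of _ "X \<times> Y \<times> Z"]) auto

lemma triple_count_eq_density:
  assumes disj: "X \<inter> Y = {}" "Y \<inter> Z = {}" "X \<inter> Z = {}" and fin: "finite X" "finite Y" "finite Z"
  shows "real (triple_count E X Y Z) = density E X Y Z * (card X * card Y * card Z)"
proof (cases "X = {} \<or> Y = {} \<or> Z = {}")
  case True
  then have "{(x, y, z). x \<in> X \<and> y \<in> Y \<and> z \<in> Z \<and> {x, y, z} \<in> E} = {}" by blast
  with True show ?thesis by (auto simp: triple_count_def)
next
  case False
  let ?T = "{(x, y, z). x \<in> X \<and> y \<in> Y \<and> z \<in> Z \<and> {x, y, z} \<in> E}"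
  have inj: "inj_on (\<lambda>(x, y, z). {x, y, z}) ?T"
  proof (rule inj_onI, clarsimp)
    fix x y z x' y' z'
    assume mem: "x \<in> X" "y \<in> Y" "z \<in> Z" "x' \<in> X" "y' \<in> Y" "z' \<in> Z" and eq: "{x, y, z} = {x', y', z'}"
    have "x \<in> {x', y', z'}" using eq by blast
    then have "x = x'" using mem disj by blast
    moreover have "y \<in> {x', y', z'}" using eq by blast
    then have "y = y'" using mem disj by blast
    moreover have "z \<in> {x', y', z'}" using eq by blast
    then have "z = z'" using mem disj by blast
    ultimately show "x = x' \<and> y = y' \<and> z = z'" by simp
  qed
  have "(\<lambda>(x, y, z). {x, y, z}) ` ?T = {e\<in>E. \<exists>x\<in>X. \<exists>y\<in>Y. \<exists>z\<in>Z. e = {x, y, z}}"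
    by auto
  then have "triple_count E X Y Z = card {e\<in>E. \<exists>x\<in>X. \<exists>y\<in>Y. \<exists>z\<in>Z. e = {x, y, z}}"
    unfolding triple_count_def using card_image[OF inj] by simp
  then show ?thesis using False fin by (simp add: density_def)
qed

lemma triple_count_Un:
  assumes "finite X" "finite X'" "finite Y" "finite Y'" "finite Z" "finite Z'"
  shows "X \<inter> X' = {} \<Longrightarrow> triple_count E (X \<union> X') Y Z = triple_count E X Y Z + triple_count E X' Y Z"
    and "Y \<inter> Y' = {} \<Longrightarrow> triple_count E X (Y \<union> Y') Z = triple_count E X Y Z + triple_count E X Y' Z"
    and "Z \<inter> Z' = {} \<Longrightarrow> triple_count E X Y (Z \<union> Z') = triple_count E X Y Z + triple_count E X Y Z'"
proof -
  let ?T = "\<lambda>X Y Z. {(x, y, z). x \<in> X \<and> y \<in> Y \<and> z \<in> Z \<and> {x, y, z} \<in> E}"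
  have "?T (X \<union> X') Y Z = ?T X Y Z \<union> ?T X' Y Z" "?T X (Y \<union> Y') Z = ?T X Y Z \<union> ?T X Y' Z"
    "?T X Y (Z \<union> Z') = ?T X Y Z \<union> ?T X Y Z'"
    by auto
  note eqs = this
  show "X \<inter> X' = {} \<Longrightarrow> triple_count E (X \<union> X') Y Z = triple_count E X Y Z + triple_count E X' Y Z"
    unfolding triple_count_def eqs(1) by (subst card_Un_disjoint) (use assms finite_edge_triples in auto)
  show "Y \<inter> Y' = {} \<Longrightarrow> triple_count E X (Y \<union> Y') Z = triple_count E X Y Z + triple_count E X Y' Z"
    unfolding triple_count_def eqs(2) by (subst card_Un_disjoint) (use assms finite_edge_triples in auto)
  show "Z \<inter> Z' = {} \<Longrightarrow> triple_count E X Y (Z \<union> Z') = triple_count E X Y Z + triple_count E X Y Z'"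
    unfolding triple_count_def eqs(3) by (subst card_Un_disjoint) (use assms finite_edge_triples in auto)
qed

lemma triple_count_mono:
  "finite X \<Longrightarrow> finite Y \<Longrightarrow> finite Z \<Longrightarrow> X' \<subseteq> X \<Longrightarrow> Y' \<subseteq> Y \<Longrightarrow> Z' \<subseteq> Z \<Longrightarrow>
    triple_count E X' Y' Z' \<le> triple_count E X Y Z"
  unfolding triple_count_def by (rule card_mono[OF finite_edge_triples]) auto

definition regular_triple :: "'a set set \<Rightarrow> real \<Rightarrow> real \<Rightarrow> nat \<Rightarrow> 'a set \<Rightarrow> 'a set \<Rightarrow> 'a set \<Rightarrow> bool" where
  "regular_triple E \<epsilon> d m P1 P2 P3 \<longleftrightarrow>
     eps_regular E \<epsilon> P1 P2 P3 \<and> d \<le> density E P1 P2 P3 \<and>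
     P1 \<inter> P2 = {} \<and> P2 \<inter> P3 = {} \<and> P1 \<inter> P3 = {} \<and> finite P1 \<and> finite P2 \<and> finite P3 \<and>
     card P1 = m \<and> card P2 = m \<and> card P3 = m"

lemma eps_d_regular_triple_count:
  fixes \<epsilon> d' :: real
  assumes reg: "eps_d_regular E \<epsilon> d' P1 P2 P3"
    and disj: "P1 \<inter> P2 = {}" "P2 \<inter> P3 = {}" "P1 \<inter> P3 = {}" and fin: "finite P1" "finite P2" "finite P3"
    and A: "A1 \<subseteq> P1" "A2 \<subseteq> P2" "A3 \<subseteq> P3"
    and large: "\<epsilon> * card P1 \<le> card A1" "\<epsilon> * card P2 \<le> card A2" "\<epsilon> * card P3 \<le> card A3"
  shows "(d' - \<epsilon>) * (card A1 * card A2 * card A3) \<le> triple_count E A1 A2 A3"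
    and "triple_count E A1 A2 A3 \<le> (d' + \<epsilon>) * (card A1 * card A2 * card A3)"
proof -
  have "real (triple_count E A1 A2 A3) = density E A1 A2 A3 * (card A1 * card A2 * card A3)"
    using A disj finite_subset[OF A(1) fin(1)] finite_subset[OF A(2) fin(2)] finite_subset[OF A(3) fin(3)]
    by (intro triple_count_eq_density) blast+
  moreover have "A1 \<subseteq> P1 \<and> A2 \<subseteq> P2 \<and> A3 \<subseteq> P3 \<and>
      \<epsilon> * card P1 \<le> card A1 \<and> \<epsilon> * card P2 \<le> card A2 \<and> \<epsilon> * card P3 \<le> card A3"
    using A large by simp
  note reg[unfolded eps_d_regular_def, rule_format, OF this]
  ultimately show "(d' - \<epsilon>) * (card A1 * card A2 * card A3) \<le> triple_count E A1 A2 A3"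
    and "triple_count E A1 A2 A3 \<le> (d' + \<epsilon>) * (card A1 * card A2 * card A3)"
    by (simp_all add: mult_right_mono)
qed

lemma regular_triple_count_lower:
  fixes \<epsilon> d :: real
  assumes reg: "regular_triple E \<epsilon> d m P1 P2 P3" and "\<epsilon> \<le> 1"
    and A: "A1 \<subseteq> P1" "A2 \<subseteq> P2" "A3 \<subseteq> P3"
    and large: "\<epsilon> * m \<le> card A1" "\<epsilon> * m \<le> card A2" "\<epsilon> * m \<le> card A3"
  shows "(d - 2 * \<epsilon>) * (card A1 * card A2 * card A3) \<le> triple_count E A1 A2 A3"
proof -
  obtain d' where d': "eps_d_regular E \<epsilon> d' P1 P2 P3"
    using reg unfolding regular_triple_def eps_regular_def by blast
  have "\<epsilon> * card P1 \<le> card P1" "\<epsilon> * card P2 \<le> card P2" "\<epsilon> * card P3 \<le> card P3"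
    using mult_right_mono[OF \<open>\<epsilon> \<le> 1\<close>] by simp_all
  then have "\<bar>density E P1 P2 P3 - d'\<bar> \<le> \<epsilon>"
    using d' unfolding eps_d_regular_def by blast
  then have "d - 2 * \<epsilon> \<le> d' - \<epsilon>" using reg by (auto simp: regular_triple_def abs_le_iff)
  then have "(d - 2 * \<epsilon>) * (card A1 * card A2 * card A3) \<le> (d' - \<epsilon>) * (card A1 * card A2 * card A3)"
    by (intro mult_right_mono) auto
  also have "\<dots> \<le> triple_count E A1 A2 A3"
    using reg large by (intro eps_d_regular_triple_count(1)[OF d' _ _ _ _ _ _ A]) (auto simp: regular_triple_def)
  finally show ?thesis .
qed

text \<open>For \<open>K = K\<^sub>1\<^sub>,\<^sub>1\<^sub>,\<^sub>1\<close> the density \<open>d \<ge> 2\<epsilon>\<close> leaves no room for the counting bound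
  \<open>(d - 2\<epsilon>)|A\<^sub>1||A\<^sub>2||A\<^sub>3|\<close>; instead, an edgeless box of side \<open>\<lceil>\<epsilon>m\<rceil>\<close> forces the
  regularity density \<open>d'\<close> down to \<open>\<epsilon>\<close>, and then the seven other boxes of the split
  \<open>P\<^sub>i = B\<^sub>i \<union> C\<^sub>i\<close> cannot carry density \<open>2\<epsilon>\<close>.\<close>
lemma regular_triple_has_edge:
  fixes \<epsilon> :: real
  assumes reg: "regular_triple E \<epsilon> (2 * \<epsilon>) m P1 P2 P3" and \<epsilon>: "0 < \<epsilon>" and m: "1 \<le> (1 - 2 * \<epsilon>) * m"
    and A: "A1 \<subseteq> P1" "A2 \<subseteq> P2" "A3 \<subseteq> P3"
    and large: "\<epsilon> * m \<le> card A1" "\<epsilon> * m \<le> card A2" "\<epsilon> * m \<le> card A3"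
  shows "0 < triple_count E A1 A2 A3"
proof (rule ccontr)
  assume "\<not> 0 < triple_count E A1 A2 A3"
  then have A_empty: "triple_count E A1 A2 A3 = 0" by simp
  obtain d' where d': "eps_d_regular E \<epsilon> d' P1 P2 P3"
    using reg unfolding regular_triple_def eps_regular_def by blast
  have disj: "P1 \<inter> P2 = {}" "P2 \<inter> P3 = {}" "P1 \<inter> P3 = {}" and fin: "finite P1" "finite P2" "finite P3"
    and card_P: "card P1 = m" "card P2 = m" "card P3 = m" and dense: "2 * \<epsilon> \<le> density E P1 P2 P3"
    using reg by (simp_all add: regular_triple_def)
  have "0 < real m" using m by (cases "m = 0") auto
  have "\<epsilon> \<le> 1"
  proof (rule ccontr)
    assume "\<not> \<epsilon> \<le> 1"
    then have "(1 - 2 * \<epsilon>) * m \<le> 0" by (intro mult_nonpos_nonneg) auto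
    with m show False by linarith
  qed
  define k where "k = nat \<lceil>\<epsilon> * m\<rceil>"
  have k: "\<epsilon> * m \<le> k" "k < \<epsilon> * m + 1" "0 < k"
    using \<epsilon> \<open>0 < real m\<close> ceiling_correct[of "\<epsilon> * m"] by (auto simp: k_def)
  have "k \<le> card A1" "k \<le> card A2" "k \<le> card A3"
    using large by (simp_all add: k_def nat_le_iff ceiling_le_iff)
  then obtain B1 B2 B3 where B: "B1 \<subseteq> A1" "B2 \<subseteq> A2" "B3 \<subseteq> A3" and card_B: "card B1 = k" "card B2 = k" "card B3 = k"
    by (meson obtain_subset_with_card_n)
  define C1 C2 C3 where "C1 = P1 - B1" and "C2 = P2 - B2" and "C3 = P3 - B3"
  have BP: "B1 \<subseteq> P1" "B2 \<subseteq> P2" "B3 \<subseteq> P3" using A B by auto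
  have finB: "finite B1" "finite B2" "finite B3"
    using finite_subset[OF BP(1) fin(1)] finite_subset[OF BP(2) fin(2)] finite_subset[OF BP(3) fin(3)] .
  have "k \<le> m" using card_mono[OF fin(1) BP(1)] card_B card_P by simp
  then have card_C: "real (card C1) = m - real k" "real (card C2) = m - real k" "real (card C3) = m - real k"
    using BP finB card_B card_P by (simp_all add: C1_def C2_def C3_def card_Diff_subset of_nat_diff)
  have "\<epsilon> * m \<le> m - real k" using k m by (simp add: algebra_simps)
  have "d' \<le> \<epsilon>"
  proof -
    have "triple_count E B1 B2 B3 = 0"
      using A_empty triple_count_mono[of A1 A2 A3 B1 B2 B3 E] finite_subset[OF A(1) fin(1)]
        finite_subset[OF A(2) fin(2)] finite_subset[OF A(3) fin(3)] B by simp
    then have "(d' - \<epsilon>) * (real k * real k * real k) \<le> 0"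
      using eps_d_regular_triple_count(1)[OF d' disj fin BP] card_B card_P k by simp
    then show ?thesis using k by (simp add: mult_le_0_iff)
  qed
  have upper: "triple_count E X Y Z \<le> 2 * \<epsilon> * (card X * card Y * card Z)"
    if "X \<subseteq> P1" "Y \<subseteq> P2" "Z \<subseteq> P3" "\<epsilon> * m \<le> card X" "\<epsilon> * m \<le> card Y" "\<epsilon> * m \<le> card Z"
    for X Y Z
  proof -
    have "triple_count E X Y Z \<le> (d' + \<epsilon>) * (card X * card Y * card Z)"
      using eps_d_regular_triple_count(2)[OF d' disj fin that(1-3)] that(4-6) card_P by simp
    also have "\<dots> \<le> 2 * \<epsilon> * (card X * card Y * card Z)"
      using \<open>d' \<le> \<epsilon>\<close> by (intro mult_right_mono) auto
    finally show ?thesis .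
  qed
  have CP: "C1 \<subseteq> P1" "C2 \<subseteq> P2" "C3 \<subseteq> P3" by (auto simp: C1_def C2_def C3_def)
  have finC: "finite C1" "finite C2" "finite C3" using fin by (simp_all add: C1_def C2_def C3_def)
  have split: "P1 = B1 \<union> C1" "P2 = B2 \<union> C2" "P3 = B3 \<union> C3" "B1 \<inter> C1 = {}" "B2 \<inter> C2 = {}" "B3 \<inter> C3 = {}"
    using BP by (auto simp: C1_def C2_def C3_def)
  have "triple_count E P1 P2 P3 = triple_count E B1 P2 P3 + triple_count E C1 P2 P3"
    using triple_count_Un(1)[OF finB(1) finC(1) fin(2) fin(2) fin(3) fin(3)] split by simp
  moreover have "triple_count E B1 P2 P3 = triple_count E B1 B2 P3 + triple_count E B1 C2 P3"
    using triple_count_Un(2)[OF finB(1) finB(1) finB(2) finC(2) fin(3) fin(3)] split by simp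
  moreover have "triple_count E B1 B2 P3 = triple_count E B1 B2 B3 + triple_count E B1 B2 C3"
    using triple_count_Un(3)[OF finB(1) finB(1) finB(2) finB(2) finB(3) finC(3)] split by simp
  ultimately have "triple_count E P1 P2 P3
      = triple_count E C1 P2 P3 + triple_count E B1 C2 P3 + triple_count E B1 B2 B3 + triple_count E B1 B2 C3"
    by simp
  also have "triple_count E B1 B2 B3 = 0"
    using A_empty triple_count_mono[of A1 A2 A3 B1 B2 B3 E] finite_subset[OF A(1) fin(1)]
      finite_subset[OF A(2) fin(2)] finite_subset[OF A(3) fin(3)] B by simp
  finally have "real (triple_count E P1 P2 P3) \<le>
      2 * \<epsilon> * ((m - real k) * m * m + k * (m - real k) * m + k * k * (m - real k))"
    using upper[OF CP(1) subset_refl subset_refl] upper[OF BP(1) CP(2) subset_refl]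
      upper[OF BP(1) BP(2) CP(3)] card_B card_C card_P k \<open>\<epsilon> * m \<le> m - real k\<close> \<open>\<epsilon> \<le> 1\<close>
    by (simp add: algebra_simps, (linarith)?)
  also have "\<dots> < 2 * \<epsilon> * (real m * m * m)"
    using \<epsilon> k \<open>0 < real m\<close> by (intro mult_strict_left_mono) (auto simp: algebra_simps)
  also have "\<dots> \<le> real (triple_count E P1 P2 P3)"
    using dense card_P triple_count_eq_density[OF disj fin, of E] by (simp add: mult_right_mono)
  finally show False by simp
qed

lemma complete_triple_subset:
  "complete_triple E X Y Z \<Longrightarrow> X' \<subseteq> X \<Longrightarrow> Y' \<subseteq> Y \<Longrightarrow> Z' \<subseteq> Z \<Longrightarrow> complete_triple E X' Y' Z'"
  unfolding complete_triple_def by blast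

text \<open>The second density hypothesis only matters for \<open>c > 1\<close>; for \<open>K\<^sub>1\<^sub>,\<^sub>1\<^sub>,\<^sub>1\<close> a single edge
  suffices, which \<open>regular_triple_has_edge\<close> provides.\<close>
lemma regular_triple_complete_triple:
  fixes c :: nat and \<epsilon> d :: real
  assumes c: "1 \<le> c" and \<epsilon>: "0 < \<epsilon>" "2 * \<epsilon> < 1" and d: "2 * \<epsilon> \<le> d" "c = 1 \<or> 3 * \<epsilon> \<le> d"
  obtains N :: nat where
    "\<And>(E::'a set set) P1 P2 P3 m A1 A2 A3. regular_triple E \<epsilon> d m P1 P2 P3 \<Longrightarrow> 1 \<le> (1 - 2 * \<epsilon>) * m \<Longrightarrow>
       A1 \<subseteq> P1 \<Longrightarrow> A2 \<subseteq> P2 \<Longrightarrow> A3 \<subseteq> P3 \<Longrightarrow>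
       \<epsilon> * m + N \<le> card A1 \<Longrightarrow> \<epsilon> * m + N \<le> card A2 \<Longrightarrow> \<epsilon> * m + N \<le> card A3 \<Longrightarrow>
       \<exists>X1\<subseteq>A1. \<exists>X2\<subseteq>A2. \<exists>X3\<subseteq>A3. card X1 = c \<and> card X2 = c \<and> card X3 = c \<and> complete_triple E X1 X2 X3"
proof -
  obtain N :: nat where N:
    "\<And>(A1::'a set) (A2::'a set) (A3::'a set) Q. finite A1 \<Longrightarrow> finite A2 \<Longrightarrow> finite A3 \<Longrightarrow>
       N \<le> card A1 \<Longrightarrow> N \<le> card A2 \<Longrightarrow> N \<le> card A3 \<Longrightarrow>
       \<epsilon> * card A1 * card A2 * card A3 \<le> card {(x, y, z). x \<in> A1 \<and> y \<in> A2 \<and> z \<in> A3 \<and> Q x y z} \<Longrightarrow>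
       \<exists>X\<subseteq>A1. \<exists>Y\<subseteq>A2. \<exists>Z\<subseteq>A3. card X = c \<and> card Y = c \<and> card Z = c \<and> (\<forall>x\<in>X. \<forall>y\<in>Y. \<forall>z\<in>Z. Q x y z)"
    by (rule dense_tripartite_complete_subgraph[of \<epsilon> c c]) (use \<epsilon> c in auto)
  show thesis
  proof (rule that[of N])
    fix E :: "'a set set" and P1 P2 P3 m A1 A2 A3
    assume reg: "regular_triple E \<epsilon> d m P1 P2 P3" and m: "1 \<le> (1 - 2 * \<epsilon>) * m"
      and A: "A1 \<subseteq> P1" "A2 \<subseteq> P2" "A3 \<subseteq> P3"
      and large: "\<epsilon> * m + N \<le> card A1" "\<epsilon> * m + N \<le> card A2" "\<epsilon> * m + N \<le> card A3"
    have fin: "finite A1" "finite A2" "finite A3"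
      using reg A by (auto simp: regular_triple_def intro: finite_subset)
    have large': "\<epsilon> * m \<le> card A1" "\<epsilon> * m \<le> card A2" "\<epsilon> * m \<le> card A3" using large by simp_all
    show "\<exists>X1\<subseteq>A1. \<exists>X2\<subseteq>A2. \<exists>X3\<subseteq>A3. card X1 = c \<and> card X2 = c \<and> card X3 = c \<and> complete_triple E X1 X2 X3"
    proof (cases "c = 1")
      case True
      have "regular_triple E \<epsilon> (2 * \<epsilon>) m P1 P2 P3"
        using reg d(1) by (auto simp: regular_triple_def)
      then have "0 < triple_count E A1 A2 A3"
        using regular_triple_has_edge \<epsilon>(1) m A large' by blast
      then have "{(x, y, z). x \<in> A1 \<and> y \<in> A2 \<and> z \<in> A3 \<and> {x, y, z} \<in> E} \<noteq> {}"
        unfolding triple_count_def by (metis card.empty less_irrefl)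
      then obtain x y z where "x \<in> A1" "y \<in> A2" "z \<in> A3" "{x, y, z} \<in> E" by blast
      with True show ?thesis
        by (intro exI[of _ "{x}"] conjI exI[of _ "{y}"] exI[of _ "{z}"]) (auto simp: complete_triple_def)
    next
      case False
      have "\<epsilon> \<le> 1" using \<epsilon> by simp
      have "\<epsilon> * (card A1 * card A2 * card A3) \<le> (d - 2 * \<epsilon>) * (card A1 * card A2 * card A3)"
        using d False by (intro mult_right_mono) auto
      also have "\<dots> \<le> triple_count E A1 A2 A3"
        using regular_triple_count_lower[OF reg \<open>\<epsilon> \<le> 1\<close> A large'] .
      finally have "\<epsilon> * card A1 * card A2 * card A3 \<le> card {(x, y, z). x \<in> A1 \<and> y \<in> A2 \<and> z \<in> A3 \<and> {x, y, z} \<in> E}"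
        by (simp add: triple_count_def mult.assoc)
      moreover have "real N \<le> card A1" "real N \<le> card A2" "real N \<le> card A3"
        using large \<epsilon> by (smt (verit) of_nat_0_le_iff mult_nonneg_nonneg)+
      ultimately show ?thesis
        using N[OF fin, of "\<lambda>x y z. {x, y, z} \<in> E"] by (simp add: complete_triple_def)
    qed
  qed
qed

lemma regular_triple_K_rich:
  fixes a b c :: nat and \<epsilon> d :: real
  assumes abc: "1 \<le> a" "a \<le> b" "b \<le> c" and \<epsilon>: "0 < \<epsilon>" "2 * \<epsilon> < 1"
    and d: "2 * real b * real c ^ 2 * \<epsilon> \<le> d"
  obtains N :: nat where
    "\<And>(E::'a set set) P1 P2 P3 m. regular_triple E \<epsilon> d m P1 P2 P3 \<Longrightarrow> 1 \<le> (1 - 2 * \<epsilon>) * m \<Longrightarrow>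
       K_rich a b c E (\<epsilon> * m + N) P1 P2 P3"
proof -
  have d': "2 * \<epsilon> \<le> d" "c = 1 \<or> 3 * \<epsilon> \<le> d"
  proof -
    have "1 \<le> real b" "1 \<le> real c" using abc by auto
    then have bc: "1 \<le> real b * real c ^ 2" using mult_mono[of 1 "real b" 1 "real c ^ 2"] one_le_power by simp
    have scale: "2 * \<epsilon> * x \<le> d" if "x \<le> real b * real c ^ 2" for x
    proof -
      have "2 * \<epsilon> * x \<le> 2 * \<epsilon> * (real b * real c ^ 2)" using that \<epsilon> by (intro mult_left_mono) auto
      then show ?thesis using d by (simp add: algebra_simps)
    qed
    show "2 * \<epsilon> \<le> d" using scale[OF bc] by simp
    have "c = 1 \<or> 2 \<le> real c" using abc by auto
    then have "c = 1 \<or> 4 \<le> real b * real c ^ 2"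
      using \<open>1 \<le> real b\<close> power_mono[of 2 "real c" 2] mult_mono[of 1 "real b" 4 "real c ^ 2"] by auto
    then show "c = 1 \<or> 3 * \<epsilon> \<le> d" using scale[of 4] \<epsilon> by auto
  qed
  obtain N :: nat where N: "\<And>(E::'a set set) P1 P2 P3 m A1 A2 A3. regular_triple E \<epsilon> d m P1 P2 P3 \<Longrightarrow>
       1 \<le> (1 - 2 * \<epsilon>) * m \<Longrightarrow> A1 \<subseteq> P1 \<Longrightarrow> A2 \<subseteq> P2 \<Longrightarrow> A3 \<subseteq> P3 \<Longrightarrow>
       \<epsilon> * m + N \<le> card A1 \<Longrightarrow> \<epsilon> * m + N \<le> card A2 \<Longrightarrow> \<epsilon> * m + N \<le> card A3 \<Longrightarrow>
       \<exists>X1\<subseteq>A1. \<exists>X2\<subseteq>A2. \<exists>X3\<subseteq>A3. card X1 = c \<and> card X2 = c \<and> card X3 = c \<and> complete_triple E X1 X2 X3"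
    by (rule regular_triple_complete_triple[of c \<epsilon> d]) (use abc \<epsilon> d' in auto)
  show thesis
  proof (rule that[of N], unfold K_rich_def, intro allI impI ballI)
    fix E :: "'a set set" and P1 P2 P3 m A1 A2 A3 q
    assume reg: "regular_triple E \<epsilon> d m P1 P2 P3" and m: "1 \<le> (1 - 2 * \<epsilon>) * m"
      and A: "A1 \<subseteq> P1" "A2 \<subseteq> P2" "A3 \<subseteq> P3"
      and large: "\<epsilon> * m + N \<le> card A1 \<and> \<epsilon> * m + N \<le> card A2 \<and> \<epsilon> * m + N \<le> card A3"
      and q: "q \<in> orientations a b c"
    obtain X1 X2 X3 where X: "X1 \<subseteq> A1" "X2 \<subseteq> A2" "X3 \<subseteq> A3" "card X1 = c" "card X2 = c" "card X3 = c"
      and complete: "complete_triple E X1 X2 X3"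
      using N[OF reg m A] large by blast
    obtain q1 q2 q3 where q_def: "q = (q1, q2, q3)" by (cases q) auto
    then have "q1 \<le> c" "q2 \<le> c" "q3 \<le> c" using q abc by (auto simp: orientations_def)
    then obtain Y1 Y2 Y3 where "Y1 \<subseteq> X1" "Y2 \<subseteq> X2" "Y3 \<subseteq> X3" "card Y1 = q1" "card Y2 = q2" "card Y3 = q3"
      using X by (metis obtain_subset_with_card_n)
    then show "\<exists>Y1\<subseteq>A1. \<exists>Y2\<subseteq>A2. \<exists>Y3\<subseteq>A3. (card Y1, card Y2, card Y3) = q \<and> complete_triple E Y1 Y2 Y3"
      using X complete_triple_subset[OF complete] q_def
      by (intro exI[of _ Y1] conjI exI[of _ Y2] exI[of _ Y3]) auto
  qed
qed

section \<open>Tiling a single cluster edge\<close>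

text \<open>The weights \<open>h(v,e)\<close> of the three vertices of an edge satisfy this by the labelling
  condition of a fractional hom(\<open>K\<close>)-tiling.\<close>
definition in_cone :: "real \<Rightarrow> real \<Rightarrow> real \<Rightarrow> real \<Rightarrow> real \<Rightarrow> real \<Rightarrow> bool" where
  "in_cone a b c x1 x2 x3 \<longleftrightarrow>
    (\<forall>x\<in>{x1, x2, x3}. a * (x1 + x2 + x3) \<le> (a + b + c) * x \<and> (a + b + c) * x \<le> c * (x1 + x2 + x3))"

lemma in_cone_scale:
  assumes cone: "in_cone a b c x1 x2 x3" and m: "0 \<le> m"
  shows "in_cone a b c (x1 * m) (x2 * m) (x3 * m)"
  unfolding in_cone_def
proof
  fix y assume "y \<in> {x1 * m, x2 * m, x3 * m}"
  then obtain x where x: "x \<in> {x1, x2, x3}" and y: "y = x * m" by auto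
  have "a * (x1 + x2 + x3) * m \<le> (a + b + c) * x * m" "(a + b + c) * x * m \<le> c * (x1 + x2 + x3) * m"
    using cone x m unfolding in_cone_def by (auto intro: mult_right_mono)
  then show "a * (x1 * m + x2 * m + x3 * m) \<le> (a + b + c) * y \<and> (a + b + c) * y \<le> c * (x1 * m + x2 * m + x3 * m)"
    unfolding y by (simp add: algebra_simps)
qed

lemma balanced_if_in_cone:
  fixes a b c :: real
  assumes abc: "1 \<le> a" "a \<le> b" "b \<le> c" and cone: "in_cone a b c x1 x2 x3"
    and s: "s1 \<le> x1" "x1 < s1 + 1" "s2 \<le> x2" "x2 < s2 + 1" "s3 \<le> x3" "x3 < s3 + 1"
  shows "balanced a b c s1 s2 s3"
proof -
  have "c * 3 \<le> c * (a + b + c)" using abc by (intro mult_left_mono) auto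
  then have c3: "c * 3 \<le> (a + b + c) * (2 * c)" using abc by (simp add: algebra_simps)
  have S: "a * (s1 + s2 + s3) \<le> a * (x1 + x2 + x3)" "c * (x1 + x2 + x3) \<le> c * (s1 + s2 + s3 + 3)"
    using abc s by (intro mult_left_mono; simp)+
  have "a * (s1 + s2 + s3) \<le> (a + b + c) * (s + 2 * c) \<and> (a + b + c) * s \<le> c * (s1 + s2 + s3) + (a + b + c) * (2 * c)"
    if "x \<in> {x1, x2, x3}" "s \<le> x" "x < s + 1" for s x
  proof -
    have "a * (x1 + x2 + x3) \<le> (a + b + c) * x" "(a + b + c) * x \<le> c * (x1 + x2 + x3)"
      using cone that(1) unfolding in_cone_def by blast+
    moreover have "(a + b + c) * x \<le> (a + b + c) * (s + 2 * c)" "(a + b + c) * s \<le> (a + b + c) * x"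
      using abc that(2,3) by (intro mult_left_mono; simp)+
    ultimately show ?thesis using S c3 by (simp add: algebra_simps)
  qed
  then show ?thesis
    unfolding balanced_def using s by auto
qed

lemma frac_hom_tilingD:
  fixes h :: "'v \<Rightarrow> 'v set \<Rightarrow> real"
  assumes "frac_hom_tiling a b c VG EG h"
  shows frac_hom_tiling_nonneg: "v \<in> VG \<Longrightarrow> e \<in> EG \<Longrightarrow> 0 \<le> h v e"
    and frac_hom_tiling_outside: "v \<in> VG \<Longrightarrow> e \<in> EG \<Longrightarrow> v \<notin> e \<Longrightarrow> h v e = 0"
    and frac_hom_tiling_load: "v \<in> VG \<Longrightarrow> (\<Sum>e\<in>EG. h v e) \<le> 1"
    and frac_hom_tiling_labelling: "e \<in> EG \<Longrightarrow> \<exists>u v w. e = {u, v, w} \<and> u \<noteq> v \<and> v \<noteq> w \<and> u \<noteq> w \<and>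
        h u e \<le> h v e \<and> h v e \<le> h w e \<and> h v e / b \<le> h u e / a \<and> h w e / c \<le> h v e / b"
  using assms[unfolded frac_hom_tiling_def] by simp_all

lemma frac_hom_tiling_cone:
  fixes a b c :: nat and h :: "'v \<Rightarrow> 'v set \<Rightarrow> real"
  assumes abc: "1 \<le> a" "a \<le> b" "b \<le> c" and h: "frac_hom_tiling a b c VG EG h"
    and e: "e \<in> EG" "e \<subseteq> VG" and z: "z \<in> e"
  shows "a * (\<Sum>y\<in>e. h y e) \<le> (a + b + c) * h z e \<and> (a + b + c) * h z e \<le> c * (\<Sum>y\<in>e. h y e)"
proof -
  from frac_hom_tiling_labelling[OF h e(1)] obtain u v w where "e = {u, v, w} \<and> u \<noteq> v \<and> v \<noteq> w \<and> u \<noteq> w \<and>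
      h u e \<le> h v e \<and> h v e \<le> h w e \<and> h v e / b \<le> h u e / a \<and> h w e / c \<le> h v e / b"
    by (elim exE)
  then have uvw: "e = {u, v, w}" "u \<noteq> v" "v \<noteq> w" "u \<noteq> w"
    and sorted: "h u e \<le> h v e" "h v e \<le> h w e"
    and ratios: "h v e / b \<le> h u e / a" "h w e / c \<le> h v e / b"
    by blast+
  have pos: "0 < real a" "0 < real b" "0 < real c" using abc by auto
  have "a * h v e \<le> b * h u e" "b * h w e \<le> c * h v e" "a * h w e \<le> c * h u e"
    using ratios pos order_trans[OF ratios(2,1)] by (simp_all add: field_simps)
  moreover have "(a + b + c) * h u e \<le> (a + b + c) * h z e" "(a + b + c) * h z e \<le> (a + b + c) * h w e"
    using z uvw sorted by (intro mult_left_mono; auto)+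
  moreover have "(\<Sum>y\<in>e. h y e) = h u e + h v e + h w e" using uvw by simp
  ultimately show ?thesis by (simp add: algebra_simps)
qed

lemma nat_floor_bounds:
  fixes x :: real
  assumes "0 \<le> x"
  shows "real (nat \<lfloor>x\<rfloor>) \<le> x" "x < real (nat \<lfloor>x\<rfloor>) + 1"
proof -
  have "real (nat \<lfloor>x\<rfloor>) = of_int \<lfloor>x\<rfloor>" using assms by simp
  then show "real (nat \<lfloor>x\<rfloor>) \<le> x" "x < real (nat \<lfloor>x\<rfloor>) + 1" using floor_correct[of x] by linarith+
qed

lemma eventually_affine_le:
  fixes p q r :: real
  assumes "p < q"
  obtains M where "\<And>m. M \<le> m \<Longrightarrow> r + p * m \<le> q * m"
proof
  fix m assume "r / (q - p) \<le> m"
  then have "r \<le> (q - p) * m" using assms by (simp add: pos_divide_le_eq mult.commute)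
  then show "r + p * m \<le> q * m" by (simp add: algebra_simps)
qed

text \<open>The greedy loss per cluster edge grows like \<open>m(a+b+c)\<epsilon>/a\<close>; it is absorbed by the
  slack between \<open>1 - \<epsilon>\<close> and \<open>1 - 2bc\<^sup>3\<epsilon>\<close> on an edge of weight at least \<open>3/(bc\<^sup>2)\<close>.\<close>
lemma greedy_loss_slope:
  fixes A B C \<epsilon> :: real
  assumes abc: "1 \<le> A" "A \<le> B" "B \<le> C" and \<epsilon>: "0 < \<epsilon>" and \<beta>: "2 * B * C ^ 3 * \<epsilon> < 1"
  shows "(A + B + C) * \<epsilon> / A < 3 / (B * C ^ 2) * (2 * B * C ^ 3 * \<epsilon> - \<epsilon>) / (1 - \<epsilon>)"
proof -
  have pos: "0 < B * C ^ 2" "1 \<le> C ^ 3" using abc by auto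
  have BC3: "1 \<le> B * C ^ 3" using abc mult_mono[OF _ \<open>1 \<le> C ^ 3\<close>, of 1 B] by simp
  have "2 * \<epsilon> \<le> 2 * B * C ^ 3 * \<epsilon>" using mult_right_mono[OF BC3, of "2 * \<epsilon>"] \<epsilon> by (simp add: algebra_simps)
  then have "0 < 1 - \<epsilon>" using \<beta> \<epsilon> by linarith
  have "C \<le> A * C" using abc mult_right_mono[of 1 A C] by simp
  then have "A + B + C \<le> A + 2 * (A * C)" using abc by linarith
  then have "A + B + C \<le> A * (1 + 2 * C)" by (simp add: algebra_simps)
  then have "(A + B + C) / A \<le> 1 + 2 * C" using abc by (simp add: divide_le_eq mult.commute)
  then have "(A + B + C) / A * (B * C ^ 2) \<le> (1 + 2 * C) * (B * C ^ 2)"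
    using pos by (intro mult_right_mono) auto
  also have "\<dots> \<le> 3 * (B * C ^ 3)"
    using abc pos by (simp add: algebra_simps power2_eq_square power3_eq_cube)
  finally have "(A + B + C) / A * (B * C ^ 2) * (1 - \<epsilon>) \<le> 3 * (B * C ^ 3) * (1 - \<epsilon>)"
    using \<open>0 < 1 - \<epsilon>\<close> by (intro mult_right_mono) auto
  also have "\<dots> < 3 * (B * C ^ 3)"
    using BC3 \<epsilon> mult_pos_pos[of "B * C ^ 3" \<epsilon>] by (simp add: algebra_simps)
  also have "\<dots> \<le> 3 * (2 * B * C ^ 3 - 1)" using BC3 by simp
  finally have "(A + B + C) / A * (B * C ^ 2) * (1 - \<epsilon>) < 3 * (2 * B * C ^ 3 - 1)" .
  then have "(A + B + C) / A * (B * C ^ 2 * (1 - \<epsilon>)) < 3 * (2 * B * C ^ 3 - 1)"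
    by (simp only: mult.assoc)
  moreover have "0 < B * C ^ 2 * (1 - \<epsilon>)" using pos \<open>0 < 1 - \<epsilon>\<close> by simp
  ultimately have "(A + B + C) / A < 3 * (2 * B * C ^ 3 - 1) / (B * C ^ 2 * (1 - \<epsilon>))"
    by (simp add: pos_less_divide_eq)
  then have "(A + B + C) / A * \<epsilon> < 3 * (2 * B * C ^ 3 - 1) / (B * C ^ 2 * (1 - \<epsilon>)) * \<epsilon>"
    using \<epsilon> by (rule mult_strict_right_mono)
  also have "\<dots> = 3 / (B * C ^ 2) * (2 * B * C ^ 3 * \<epsilon> - \<epsilon>) / (1 - \<epsilon>)"
    using pos \<open>0 < 1 - \<epsilon>\<close> by (simp add: field_simps)
  finally show ?thesis by simp
qed

lemma two_eps_le_beta: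
  fixes \<epsilon> :: real
  assumes "1 \<le> b" "1 \<le> c" "0 \<le> \<epsilon>"
  shows "2 * \<epsilon> \<le> 2 * real b * real c ^ 3 * \<epsilon>"
proof -
  have "1 \<le> real b * real c ^ 3" using assms mult_mono[of 1 "real b" 1 "real c ^ 3"] by simp
  then show ?thesis using assms mult_right_mono[of 1 "real b * real c ^ 3" "2 * \<epsilon>"]
    by (simp add: algebra_simps)
qed

lemma greedy_loss_eventually_small:
  fixes a b c N :: nat and \<epsilon> :: real
  assumes abc: "1 \<le> a" "a \<le> b" "b \<le> c" and \<epsilon>: "0 < \<epsilon>" and \<beta>: "2 * real b * real c ^ 3 * \<epsilon> < 1"
  obtains M :: real where "\<And>m. M \<le> m \<Longrightarrow> 1 \<le> (1 - 2 * \<epsilon>) * m"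
    "\<And>m. M \<le> m \<Longrightarrow> 3 + (real a + real b + real c) * (\<epsilon> * m + real N + 2 * real c) / real a
        \<le> 3 / (real b * real c ^ 2) * ((2 * real b * real c ^ 3 * \<epsilon> - \<epsilon>) / (1 - \<epsilon>)) * m"
proof -
  define r where "r = 3 + (real a + real b + real c) * (real N + 2 * real c) / real a"
  have abc': "1 \<le> real a" "real a \<le> real b" "real b \<le> real c" using abc by auto
  obtain M1 where M1: "\<And>m. M1 \<le> m \<Longrightarrow> r + (real a + real b + real c) * \<epsilon> / a * m
      \<le> 3 / (real b * real c ^ 2) * ((2 * real b * real c ^ 3 * \<epsilon> - \<epsilon>) / (1 - \<epsilon>)) * m"
    using eventually_affine_le[OF greedy_loss_slope[OF abc' \<epsilon> \<beta>], where r = r] by auto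
  have "2 * \<epsilon> < 1" using two_eps_le_beta[of b c \<epsilon>] abc \<epsilon> \<beta> by linarith
  then obtain M2 where M2: "\<And>m. M2 \<le> m \<Longrightarrow> 1 + 0 * m \<le> (1 - 2 * \<epsilon>) * m"
    using eventually_affine_le[of 0 "1 - 2 * \<epsilon>"] by auto
  have "3 + (real a + real b + real c) * (\<epsilon> * m + real N + 2 * real c) / real a
      = r + (real a + real b + real c) * \<epsilon> / a * m" for m
    using abc' by (simp add: r_def field_simps)
  then show thesis using that[of "max M1 M2"] M1 M2 by simp
qed

lemma in_cone_sum_zero_or_ge:
  fixes a b c r y1 y2 y3 :: real
  assumes abc: "0 < a" "0 \<le> b" "0 \<le> c" and cone: "in_cone a b c y1 y2 y3"
    and y: "0 \<le> y1" "0 \<le> y2" "0 \<le> y3" and r: "\<forall>y\<in>{y1, y2, y3}. y \<noteq> 0 \<longrightarrow> r \<le> y"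
  shows "y1 + y2 + y3 = 0 \<or> 3 * r \<le> y1 + y2 + y3"
proof (cases "y1 + y2 + y3 = 0")
  case False
  then have "0 < a * (y1 + y2 + y3)" using abc y by simp
  have "0 < y" if "y \<in> {y1, y2, y3}" for y
  proof -
    have "a * (y1 + y2 + y3) \<le> (a + b + c) * y" using cone that unfolding in_cone_def by blast
    then have "0 < (a + b + c) * y" using \<open>0 < a * (y1 + y2 + y3)\<close> by linarith
    then show ?thesis using abc by (simp add: zero_less_mult_iff)
  qed
  then have "r \<le> y1" "r \<le> y2" "r \<le> y3" using r by auto
  then show ?thesis by linarith
qed simp

lemma cluster_edge_K_tiling:
  fixes a b c :: nat and \<epsilon> d :: real
  assumes abc: "1 \<le> a" "a \<le> b" "b \<le> c" and \<epsilon>: "0 < \<epsilon>"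
    and d: "2 * real b * real c ^ 2 * \<epsilon> \<le> d" and \<beta>: "2 * real b * real c ^ 3 * \<epsilon> < 1"
  obtains M :: real where
    "\<And>(V::'a set) E P1 P2 P3 m U1 U2 U3 y1 y2 y3.
       regular_triple E \<epsilon> d m P1 P2 P3 \<Longrightarrow> P1 \<union> P2 \<union> P3 \<subseteq> V \<Longrightarrow> finite V \<Longrightarrow> M \<le> m \<Longrightarrow>
       U1 \<subseteq> P1 \<Longrightarrow> U2 \<subseteq> P2 \<Longrightarrow> U3 \<subseteq> P3 \<Longrightarrow>
       card U1 = nat \<lfloor>y1 * m\<rfloor> \<Longrightarrow> card U2 = nat \<lfloor>y2 * m\<rfloor> \<Longrightarrow> card U3 = nat \<lfloor>y3 * m\<rfloor> \<Longrightarrow>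
       0 \<le> y1 \<Longrightarrow> 0 \<le> y2 \<Longrightarrow> 0 \<le> y3 \<Longrightarrow> in_cone a b c y1 y2 y3 \<Longrightarrow>
       \<forall>y\<in>{y1, y2, y3}. y \<noteq> 0 \<longrightarrow> 1 / (real b * real c ^ 2) \<le> y \<Longrightarrow>
       \<exists>T. K_tiling a b c V E T \<and> covered T \<subseteq> U1 \<union> U2 \<union> U3 \<and>
         (1 - 2 * real b * real c ^ 3 * \<epsilon>) * m / (1 - \<epsilon>) * (y1 + y2 + y3) \<le> card (covered T)"
proof -
  define \<beta> where "\<beta> = 2 * real b * real c ^ 3 * \<epsilon>"
  define k where "k = 3 / (real b * real c ^ 2)"
  have abc': "1 \<le> real a" "real a \<le> real b" "real b \<le> real c" using abc by auto
  have "2 * \<epsilon> \<le> \<beta>" unfolding \<beta>_def using two_eps_le_beta abc \<epsilon> by simp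
  then have \<epsilon>2: "2 * \<epsilon> < 1" using \<beta> by (simp add: \<beta>_def)
  obtain N :: nat where N: "\<And>(E::'a set set) P1 P2 P3 m. regular_triple E \<epsilon> d m P1 P2 P3 \<Longrightarrow>
      1 \<le> (1 - 2 * \<epsilon>) * m \<Longrightarrow> K_rich a b c E (\<epsilon> * m + N) P1 P2 P3"
    using regular_triple_K_rich[OF abc \<epsilon> \<epsilon>2 d] by blast
  define loss where "loss m = 3 + (real a + real b + real c) * (\<epsilon> * m + real N + 2 * real c) / real a"
    for m :: real
  obtain M :: real where M: "\<And>m. M \<le> m \<Longrightarrow> 1 \<le> (1 - 2 * \<epsilon>) * m"
    "\<And>m. M \<le> m \<Longrightarrow> loss m \<le> k * ((\<beta> - \<epsilon>) / (1 - \<epsilon>)) * m"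
    unfolding loss_def k_def \<beta>_def by (rule greedy_loss_eventually_small[OF abc \<epsilon> \<beta>]) blast+
  show thesis
  proof (rule that[of M])
    fix V :: "'a set" and E P1 P2 P3 m U1 U2 U3 y1 y2 y3
    assume reg: "regular_triple E \<epsilon> d m P1 P2 P3" and V: "P1 \<union> P2 \<union> P3 \<subseteq> V" "finite V"
      and m: "M \<le> m" and U: "U1 \<subseteq> P1" "U2 \<subseteq> P2" "U3 \<subseteq> P3"
      and card_U: "card U1 = nat \<lfloor>y1 * m\<rfloor>" "card U2 = nat \<lfloor>y2 * m\<rfloor>" "card U3 = nat \<lfloor>y3 * m\<rfloor>"
      and y: "0 \<le> y1" "0 \<le> y2" "0 \<le> y3" and cone: "in_cone a b c y1 y2 y3"
      and hmin: "\<forall>y\<in>{y1, y2, y3}. y \<noteq> 0 \<longrightarrow> 1 / (real b * real c ^ 2) \<le> y"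
    define Y where "Y = y1 + y2 + y3"
    have ym: "0 \<le> y1 * m" "0 \<le> y2 * m" "0 \<le> y3 * m" using y by simp_all
    have floor: "card U1 \<le> y1 * m" "y1 * m < real (card U1) + 1" "card U2 \<le> y2 * m"
      "y2 * m < real (card U2) + 1" "card U3 \<le> y3 * m" "y3 * m < real (card U3) + 1"
      using nat_floor_bounds[OF ym(1)] nat_floor_bounds[OF ym(2)] nat_floor_bounds[OF ym(3)]
      unfolding card_U by (simp_all only:)
    have bal: "balanced a b c (card U1) (card U2) (card U3)"
      using balanced_if_in_cone[OF abc' in_cone_scale[OF cone, of m] floor] by simp
    have rich: "K_rich a b c E (\<epsilon> * m + N) U1 U2 U3"
      using K_rich_subset[OF N[OF reg M(1)[OF m]] U] .
    have "U1 \<inter> U2 = {}" "U2 \<inter> U3 = {}" "U1 \<inter> U3 = {}" "U1 \<subseteq> V" "U2 \<subseteq> V" "U3 \<subseteq> V"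
      using reg U V unfolding regular_triple_def by blast+
    then obtain T where T: "K_tiling a b c V E T" "covered T \<subseteq> U1 \<union> U2 \<union> U3"
      and cov: "card U1 + card U2 + card U3 - (a + b + c) * (\<epsilon> * m + real N + 2 * real c) / a \<le> card (covered T)"
      using greedy_K_tiling[OF _ abc(2,3) _ _ _ V(2) _ _ _ rich bal] abc by auto
    have cov': "Y * m - loss m \<le> card (covered T)"
      using cov floor by (simp add: Y_def loss_def algebra_simps)
    have "Y = 0 \<or> k \<le> Y"
      using in_cone_sum_zero_or_ge[OF _ _ _ cone y hmin] abc' unfolding k_def Y_def by simp
    then have "(1 - \<beta>) * m / (1 - \<epsilon>) * Y \<le> card (covered T)"
    proof
      assume "k \<le> Y"
      have "0 \<le> (\<beta> - \<epsilon>) / (1 - \<epsilon>)" using \<open>2 * \<epsilon> \<le> \<beta>\<close> \<epsilon>2 \<epsilon> by simp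
      have "loss m \<le> k * ((\<beta> - \<epsilon>) / (1 - \<epsilon>)) * m" using M(2)[OF m] .
      also have "\<dots> \<le> Y * ((\<beta> - \<epsilon>) / (1 - \<epsilon>)) * m"
        using \<open>k \<le> Y\<close> \<open>0 \<le> (\<beta> - \<epsilon>) / (1 - \<epsilon>)\<close> by (intro mult_right_mono) auto
      finally have "Y * m - Y * ((\<beta> - \<epsilon>) / (1 - \<epsilon>)) * m \<le> card (covered T)" using cov' by linarith
      moreover have "Y * m - Y * ((\<beta> - \<epsilon>) / (1 - \<epsilon>)) * m = (1 - \<beta>) * m / (1 - \<epsilon>) * Y"
        using \<epsilon>2 by (simp add: field_simps)
      ultimately show ?thesis by simp
    qed simp
    then show "\<exists>T. K_tiling a b c V E T \<and> covered T \<subseteq> U1 \<union> U2 \<union> U3 \<and>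
        (1 - 2 * real b * real c ^ 3 * \<epsilon>) * m / (1 - \<epsilon>) * (y1 + y2 + y3) \<le> card (covered T)"
      using T by (auto simp: \<beta>_def Y_def)
  qed
qed

section \<open>Assembling the tiling\<close>

lemma obtain_disjoint_subsets_with_card:
  assumes "finite I" "finite S" "(\<Sum>i\<in>I. f i) \<le> card S"
  obtains Q where "\<And>i. i \<in> I \<Longrightarrow> Q i \<subseteq> S" "\<And>i. i \<in> I \<Longrightarrow> card (Q i) = f i"
    "\<And>i j. i \<in> I \<Longrightarrow> j \<in> I \<Longrightarrow> i \<noteq> j \<Longrightarrow> Q i \<inter> Q j = {}"
proof -
  have "\<exists>Q. (\<forall>i\<in>I. Q i \<subseteq> S \<and> card (Q i) = f i) \<and> (\<forall>i\<in>I. \<forall>j\<in>I. i \<noteq> j \<longrightarrow> Q i \<inter> Q j = {})"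
    using assms(1,3)
  proof (induction I rule: finite_induct)
    case (insert x I)
    then obtain Q where Q: "\<forall>i\<in>I. Q i \<subseteq> S \<and> card (Q i) = f i"
      and disj: "\<forall>i\<in>I. \<forall>j\<in>I. i \<noteq> j \<longrightarrow> Q i \<inter> Q j = {}"
      by auto
    have "finite (Q i)" if "i \<in> I" for i using Q that assms(2) finite_subset by blast
    then have "card (\<Union>i\<in>I. Q i) = (\<Sum>i\<in>I. card (Q i))"
      using disj by (intro card_UN_disjoint[OF insert.hyps(1)]) auto
    also have "\<dots> = (\<Sum>i\<in>I. f i)" using Q by simp
    finally have "card (\<Union>i\<in>I. Q i) = (\<Sum>i\<in>I. f i)" .
    moreover have "(\<Union>i\<in>I. Q i) \<subseteq> S" using Q by blast
    ultimately have "f x \<le> card (S - (\<Union>i\<in>I. Q i))"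
      using insert.prems insert.hyps assms(2) by (simp add: card_Diff_subset finite_subset)
    then obtain X where X: "X \<subseteq> S - (\<Union>i\<in>I. Q i)" "card X = f x"
      by (meson obtain_subset_with_card_n)
    define Q' where "Q' = Q(x := X)"
    have Q'_x: "Q' x = X" and Q'_I: "\<And>i. i \<in> I \<Longrightarrow> Q' i = Q i"
      using insert.hyps(2) by (auto simp: Q'_def)
    have "\<forall>i\<in>insert x I. Q' i \<subseteq> S \<and> card (Q' i) = f i"
      using Q X Q'_x Q'_I by auto
    moreover have "\<forall>i\<in>insert x I. \<forall>j\<in>insert x I. i \<noteq> j \<longrightarrow> Q' i \<inter> Q' j = {}"
    proof (intro ballI impI)
      fix i j assume that: "i \<in> insert x I" "j \<in> insert x I" "i \<noteq> j"
      have "X \<inter> Q k = {}" if "k \<in> I" for k using X that by blast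
      then show "Q' i \<inter> Q' j = {}"
        using that disj Q'_x Q'_I by (cases "i = x"; cases "j = x") (auto simp: Int_commute)
    qed
    ultimately show ?case by blast
  qed simp
  then obtain Q where "(\<forall>i\<in>I. Q i \<subseteq> S \<and> card (Q i) = f i) \<and> (\<forall>i\<in>I. \<forall>j\<in>I. i \<noteq> j \<longrightarrow> Q i \<inter> Q j = {})"
    by (elim exE)
  then show thesis by (intro that[of Q]) auto
qed

lemma regular_partition_clusters:
  fixes \<epsilon> :: real
  assumes H: "three_graph V E" and P: "regular_partition V E \<epsilon> t P" and t: "0 < t"
  shows "finite V" and "\<And>i. i \<in> {0..t} \<Longrightarrow> P i \<subseteq> V"
    and "\<And>i j. i \<in> {0..t} \<Longrightarrow> j \<in> {0..t} \<Longrightarrow> i \<noteq> j \<Longrightarrow> P i \<inter> P j = {}"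
    and "\<And>i. i \<in> {1..t} \<Longrightarrow> card (P i) = card (P 1)"
    and "(1 - \<epsilon>) * card V \<le> t * card (P 1)"
proof -
  have V_eq: "V = (\<Union>i\<in>{0..t}. P i)"
    using P unfolding regular_partition_def by blast
  have disj: "\<forall>i\<in>{0..t}. \<forall>j\<in>{0..t}. i \<noteq> j \<longrightarrow> P i \<inter> P j = {}"
    using P unfolding regular_partition_def by blast
  have equal: "\<forall>i\<in>{1..t}. \<forall>j\<in>{1..t}. card (P i) = card (P j)"
    using P unfolding regular_partition_def by blast
  have small: "real (card (P 0)) \<le> \<epsilon> * real (card V)"
    using P unfolding regular_partition_def by blast
  show "finite V" using H by (simp add: three_graph_def)
  show sub: "\<And>i. i \<in> {0..t} \<Longrightarrow> P i \<subseteq> V" using V_eq by blast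
  show "\<And>i j. i \<in> {0..t} \<Longrightarrow> j \<in> {0..t} \<Longrightarrow> i \<noteq> j \<Longrightarrow> P i \<inter> P j = {}" using disj by blast
  show card_P: "\<And>i. i \<in> {1..t} \<Longrightarrow> card (P i) = card (P 1)"
    by (rule equal[rule_format]) (use t in auto)
  have "finite (P i)" if "i \<in> {0..t}" for i using sub[OF that] \<open>finite V\<close> by (rule finite_subset)
  then have "card V = (\<Sum>i\<in>{0..t}. card (P i))"
    unfolding V_eq using disj by (intro card_UN_disjoint) auto
  also have "{0..t} = insert 0 {1..t}" by auto
  also have "(\<Sum>i\<in>insert 0 {1..t}. card (P i)) = card (P 0) + (\<Sum>i\<in>{1..t}. card (P i))" by simp
  also have "(\<Sum>i\<in>{1..t}. card (P i)) = (\<Sum>i\<in>{1..t}. card (P 1))"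
    by (rule sum.cong[OF refl]) (rule card_P)
  also have "\<dots> = t * card (P 1)" by simp
  finally show "(1 - \<epsilon>) * card V \<le> t * card (P 1)"
    using small by (simp add: algebra_simps)
qed

lemma cluster_edges_subset: "e \<in> cluster_edges E \<epsilon> d t P \<Longrightarrow> e \<subseteq> {1..t}"
  unfolding cluster_edges_def by auto

lemma finite_cluster_edges: "finite (cluster_edges E \<epsilon> d t P)"
  by (rule finite_subset[of _ "Pow {1..t}"]) (use cluster_edges_subset in blast, simp)

lemma cluster_edgeE:
  fixes \<epsilon> d :: real
  assumes e: "e \<in> cluster_edges E \<epsilon> d t P"
    and H: "three_graph V E" and P: "regular_partition V E \<epsilon> t P" and t: "0 < t"
  obtains i j l where "e = {i, j, l}" "i \<in> {1..t}" "j \<in> {1..t}" "l \<in> {1..t}" "i \<noteq> j" "j \<noteq> l" "i \<noteq> l"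
    "regular_triple E \<epsilon> d (card (P 1)) (P i) (P j) (P l)"
proof -
  have "\<exists>i j l. e = {i, j, l} \<and> i \<in> {1..t} \<and> j \<in> {1..t} \<and> l \<in> {1..t} \<and> i \<noteq> j \<and> j \<noteq> l \<and> i \<noteq> l \<and>
      eps_regular E \<epsilon> (P i) (P j) (P l) \<and> d \<le> density E (P i) (P j) (P l)"
    using e unfolding cluster_edges_def by (simp only: mem_Collect_eq)
  then obtain i j l where ijl: "e = {i, j, l} \<and> i \<in> {1..t} \<and> j \<in> {1..t} \<and> l \<in> {1..t} \<and> i \<noteq> j \<and> j \<noteq> l \<and> i \<noteq> l \<and>
      eps_regular E \<epsilon> (P i) (P j) (P l) \<and> d \<le> density E (P i) (P j) (P l)"
    by (elim exE)
  then have "i \<in> {0..t}" "j \<in> {0..t}" "l \<in> {0..t}" by auto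
  note clusters = regular_partition_clusters[OF H P t]
  have "finite (P i)" "finite (P j)" "finite (P l)"
    using clusters(1,2) \<open>i \<in> {0..t}\<close> \<open>j \<in> {0..t}\<close> \<open>l \<in> {0..t}\<close> finite_subset by blast+
  moreover have "P i \<inter> P j = {}" "P j \<inter> P l = {}" "P i \<inter> P l = {}"
    using clusters(3) ijl \<open>i \<in> {0..t}\<close> \<open>j \<in> {0..t}\<close> \<open>l \<in> {0..t}\<close> by blast+
  moreover have "card (P i) = card (P 1)" "card (P j) = card (P 1)" "card (P l) = card (P 1)"
    using clusters(4) ijl by blast+
  ultimately show thesis
    using that[of i j l] ijl unfolding regular_triple_def by blast
qed

lemma tiling_weight_eq_sum_over_edges:
  fixes h :: "'v \<Rightarrow> 'v set \<Rightarrow> real"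
  assumes h: "frac_hom_tiling a b c VG EG h" and fin: "finite VG" and sub: "\<And>e. e \<in> EG \<Longrightarrow> e \<subseteq> VG"
  shows "tiling_weight VG EG h = (\<Sum>e\<in>EG. \<Sum>v\<in>e. h v e)"
proof -
  have "tiling_weight VG EG h = (\<Sum>e\<in>EG. \<Sum>v\<in>VG. h v e)"
    unfolding tiling_weight_def by (rule sum.swap)
  also have "\<dots> = (\<Sum>e\<in>EG. \<Sum>v\<in>e. h v e)"
  proof (rule sum.cong[OF refl])
    fix e assume "e \<in> EG"
    then show "(\<Sum>v\<in>VG. h v e) = (\<Sum>v\<in>e. h v e)"
      using fin sub frac_hom_tiling_outside[OF h] by (intro sum.mono_neutral_right) auto
  qed
  finally show ?thesis .
qed

lemma tiling_weight_nonneg: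
  fixes h :: "'v \<Rightarrow> 'v set \<Rightarrow> real"
  assumes "frac_hom_tiling a b c VG EG h"
  shows "0 \<le> tiling_weight VG EG h"
  unfolding tiling_weight_def using frac_hom_tiling_nonneg[OF assms] by (intro sum_nonneg) auto

lemma card_covered_UN:
  assumes "finite I" "\<And>i. i \<in> I \<Longrightarrow> finite (covered (T i))"
    and "\<And>i j. i \<in> I \<Longrightarrow> j \<in> I \<Longrightarrow> i \<noteq> j \<Longrightarrow> covered (T i) \<inter> covered (T j) = {}"
  shows "card (covered (\<Union>i\<in>I. T i)) = (\<Sum>i\<in>I. card (covered (T i)))"
  using assms by (simp add: card_UN_disjoint)

lemma obtain_fractional_pieces:
  fixes h :: "'i \<Rightarrow> 'e \<Rightarrow> real" and P :: "'i \<Rightarrow> 'a set"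
  assumes R: "finite R" and P: "\<And>i. i \<in> I \<Longrightarrow> finite (P i)" "\<And>i. i \<in> I \<Longrightarrow> card (P i) = m"
    and h: "\<And>i e. i \<in> I \<Longrightarrow> e \<in> R \<Longrightarrow> 0 \<le> h i e" "\<And>i. i \<in> I \<Longrightarrow> (\<Sum>e\<in>R. h i e) \<le> 1"
  obtains Q where "\<And>i e. i \<in> I \<Longrightarrow> e \<in> R \<Longrightarrow> Q i e \<subseteq> P i"
    "\<And>i e. i \<in> I \<Longrightarrow> e \<in> R \<Longrightarrow> card (Q i e) = nat \<lfloor>h i e * m\<rfloor>"
    "\<And>i e e'. i \<in> I \<Longrightarrow> e \<in> R \<Longrightarrow> e' \<in> R \<Longrightarrow> e \<noteq> e' \<Longrightarrow> Q i e \<inter> Q i e' = {}"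
proof -
  have "\<exists>Qi. (\<forall>e\<in>R. Qi e \<subseteq> P i \<and> card (Qi e) = nat \<lfloor>h i e * m\<rfloor>) \<and>
      (\<forall>e\<in>R. \<forall>e'\<in>R. e \<noteq> e' \<longrightarrow> Qi e \<inter> Qi e' = {})" if i: "i \<in> I" for i
  proof -
    have "real (\<Sum>e\<in>R. nat \<lfloor>h i e * m\<rfloor>) \<le> (\<Sum>e\<in>R. h i e * m)"
      unfolding of_nat_sum using h(1)[OF i] by (intro sum_mono nat_floor_bounds) simp
    also have "\<dots> = (\<Sum>e\<in>R. h i e) * m" by (simp add: sum_distrib_right)
    also have "\<dots> \<le> 1 * real m" using h(2)[OF i] by (intro mult_right_mono) auto
    finally have "(\<Sum>e\<in>R. nat \<lfloor>h i e * m\<rfloor>) \<le> m" by (simp only: mult_1 of_nat_le_iff)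
    then have "(\<Sum>e\<in>R. nat \<lfloor>h i e * m\<rfloor>) \<le> card (P i)" using P(2)[OF i] by simp
    then obtain Qi where "\<And>e. e \<in> R \<Longrightarrow> Qi e \<subseteq> P i" "\<And>e. e \<in> R \<Longrightarrow> card (Qi e) = nat \<lfloor>h i e * m\<rfloor>"
      "\<And>e e'. e \<in> R \<Longrightarrow> e' \<in> R \<Longrightarrow> e \<noteq> e' \<Longrightarrow> Qi e \<inter> Qi e' = {}"
      using obtain_disjoint_subsets_with_card[OF R P(1)[OF i] \<open>_ \<le> card (P i)\<close>] by blast
    then show ?thesis by blast
  qed
  then obtain Q where "\<forall>i\<in>I. (\<forall>e\<in>R. Q i e \<subseteq> P i \<and> card (Q i e) = nat \<lfloor>h i e * m\<rfloor>) \<and>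
      (\<forall>e\<in>R. \<forall>e'\<in>R. e \<noteq> e' \<longrightarrow> Q i e \<inter> Q i e' = {})"
    by (metis (no_types))
  then show thesis by (intro that[of Q]) auto
qed

lemma pieces_UN_disjoint:
  assumes Q_sub: "\<And>i e. i \<in> I \<Longrightarrow> e \<in> R \<Longrightarrow> Q i e \<subseteq> P i"
    and Q_disj: "\<And>i e e'. i \<in> I \<Longrightarrow> e \<in> R \<Longrightarrow> e' \<in> R \<Longrightarrow> e \<noteq> e' \<Longrightarrow> Q i e \<inter> Q i e' = {}"
    and P_disj: "\<And>i j. i \<in> I \<Longrightarrow> j \<in> I \<Longrightarrow> i \<noteq> j \<Longrightarrow> P i \<inter> P j = {}"
    and e: "e \<in> R" "e' \<in> R" "e \<noteq> e'" "e \<subseteq> I" "e' \<subseteq> I"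
  shows "(\<Union>i\<in>e. Q i e) \<inter> (\<Union>i\<in>e'. Q i e') = {}"
proof -
  have "Q i e \<inter> Q i' e' = {}" if i: "i \<in> e" "i' \<in> e'" for i i'
  proof (cases "i = i'")
    case True
    then show ?thesis using Q_disj[of i e e'] e i by blast
  next
    case False
    then have "P i \<inter> P i' = {}" using P_disj e i by blast
    moreover have "Q i e \<subseteq> P i" "Q i' e' \<subseteq> P i'" using Q_sub e i by blast+
    ultimately show ?thesis by blast
  qed
  then show ?thesis by blast
qed

lemma K_tiling_of_frac_hom_tiling:
  fixes a b c :: nat and \<epsilon> d :: real
  assumes abc: "1 \<le> a" "a \<le> b" "b \<le> c" and \<epsilon>: "0 < \<epsilon>"
    and d: "2 * real b * real c ^ 2 * \<epsilon> \<le> d" and \<beta>: "2 * real b * real c ^ 3 * \<epsilon> < 1"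
  obtains M :: real where
    "\<And>(V::'a set) E t P h. three_graph V E \<Longrightarrow> regular_partition V E \<epsilon> t P \<Longrightarrow> 0 < t \<Longrightarrow>
       M \<le> card (P 1) \<Longrightarrow> frac_hom_tiling a b c {1..t} (cluster_edges E \<epsilon> d t P) h \<Longrightarrow>
       hmin_ge {1..t} (cluster_edges E \<epsilon> d t P) h (1 / (real b * real c ^ 2)) \<Longrightarrow>
       \<exists>T. K_tiling a b c V E T \<and>
         (1 - 2 * real b * real c ^ 3 * \<epsilon>) * card (P 1) / (1 - \<epsilon>)
           * tiling_weight {1..t} (cluster_edges E \<epsilon> d t P) h \<le> card (covered T)"
proof -
  obtain M :: real where M: "\<And>(V::'a set) E P1 P2 P3 m U1 U2 U3 y1 y2 y3.
       regular_triple E \<epsilon> d m P1 P2 P3 \<Longrightarrow> P1 \<union> P2 \<union> P3 \<subseteq> V \<Longrightarrow> finite V \<Longrightarrow> M \<le> m \<Longrightarrow>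
       U1 \<subseteq> P1 \<Longrightarrow> U2 \<subseteq> P2 \<Longrightarrow> U3 \<subseteq> P3 \<Longrightarrow>
       card U1 = nat \<lfloor>y1 * m\<rfloor> \<Longrightarrow> card U2 = nat \<lfloor>y2 * m\<rfloor> \<Longrightarrow> card U3 = nat \<lfloor>y3 * m\<rfloor> \<Longrightarrow>
       0 \<le> y1 \<Longrightarrow> 0 \<le> y2 \<Longrightarrow> 0 \<le> y3 \<Longrightarrow> in_cone a b c y1 y2 y3 \<Longrightarrow>
       \<forall>y\<in>{y1, y2, y3}. y \<noteq> 0 \<longrightarrow> 1 / (real b * real c ^ 2) \<le> y \<Longrightarrow>
       \<exists>T. K_tiling a b c V E T \<and> covered T \<subseteq> U1 \<union> U2 \<union> U3 \<and>
         (1 - 2 * real b * real c ^ 3 * \<epsilon>) * m / (1 - \<epsilon>) * (y1 + y2 + y3) \<le> card (covered T)"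
    by (rule cluster_edge_K_tiling[OF abc \<epsilon> d \<beta>]) blast
  show thesis
  proof (rule that[of M])
    fix V :: "'a set" and E t P h
    assume H: "three_graph V E" and P: "regular_partition V E \<epsilon> t P" and t: "0 < t"
      and large: "M \<le> card (P 1)" and h: "frac_hom_tiling a b c {1..t} (cluster_edges E \<epsilon> d t P) h"
      and hmin: "hmin_ge {1..t} (cluster_edges E \<epsilon> d t P) h (1 / (real b * real c ^ 2))"
    define R where "R = cluster_edges E \<epsilon> d t P"
    define m where "m = card (P 1)"
    define \<kappa> where "\<kappa> = (1 - 2 * real b * real c ^ 3 * \<epsilon>) * m / (1 - \<epsilon>)"
    note clusters = regular_partition_clusters[OF H P t]
    have R: "finite R" "\<And>e. e \<in> R \<Longrightarrow> e \<subseteq> {1..t}"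
      unfolding R_def by (rule finite_cluster_edges, rule cluster_edges_subset)
    have fin_P: "\<And>i. i \<in> {1..t} \<Longrightarrow> finite (P i)" using clusters(1,2) finite_subset by force
    have h_nonneg: "\<And>i e. i \<in> {1..t} \<Longrightarrow> e \<in> R \<Longrightarrow> 0 \<le> h i e"
      and h_load: "\<And>i. i \<in> {1..t} \<Longrightarrow> (\<Sum>e\<in>R. h i e) \<le> 1"
      using frac_hom_tiling_nonneg[OF h[folded R_def]] frac_hom_tiling_load[OF h[folded R_def]] by auto
    obtain Q where Q_sub: "\<And>i e. i \<in> {1..t} \<Longrightarrow> e \<in> R \<Longrightarrow> Q i e \<subseteq> P i"
      and Q_card: "\<And>i e. i \<in> {1..t} \<Longrightarrow> e \<in> R \<Longrightarrow> card (Q i e) = nat \<lfloor>h i e * m\<rfloor>"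
      and Q_disj: "\<And>i e e'. i \<in> {1..t} \<Longrightarrow> e \<in> R \<Longrightarrow> e' \<in> R \<Longrightarrow> e \<noteq> e' \<Longrightarrow> Q i e \<inter> Q i e' = {}"
      by (rule obtain_fractional_pieces[OF R(1) fin_P clusters(4)[folded m_def] h_nonneg h_load]) blast+
    have "\<exists>T. K_tiling a b c V E T \<and> covered T \<subseteq> (\<Union>i\<in>e. Q i e) \<and> \<kappa> * (\<Sum>i\<in>e. h i e) \<le> card (covered T)"
      if e: "e \<in> R" for e
    proof -
      obtain i j l where ijl: "e = {i, j, l}" "i \<in> {1..t}" "j \<in> {1..t}" "l \<in> {1..t}"
        and distinct: "i \<noteq> j" "j \<noteq> l" "i \<noteq> l" and reg: "regular_triple E \<epsilon> d m (P i) (P j) (P l)"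
        by (rule cluster_edgeE[OF e[unfolded R_def] H P t, folded m_def]) blast+
      have PV: "P i \<union> P j \<union> P l \<subseteq> V" using clusters(2) ijl by auto
      have cone: "in_cone a b c (h i e) (h j e) (h l e)"
        using frac_hom_tiling_cone[OF abc h e[unfolded R_def] R(2)[OF e]] ijl distinct
        unfolding in_cone_def by (simp add: R_def add.assoc)
      have hmin_e: "\<forall>y\<in>{h i e, h j e, h l e}. y \<noteq> 0 \<longrightarrow> 1 / (real b * real c ^ 2) \<le> y"
        using hmin e ijl unfolding hmin_ge_def R_def by auto
      have "\<exists>T. K_tiling a b c V E T \<and> covered T \<subseteq> Q i e \<union> Q j e \<union> Q l e \<and>
          \<kappa> * (h i e + h j e + h l e) \<le> card (covered T)"
        unfolding \<kappa>_def
        by (rule M[OF reg PV clusters(1) large[folded m_def] Q_sub[OF ijl(2) e] Q_sub[OF ijl(3) e]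
              Q_sub[OF ijl(4) e] Q_card[OF ijl(2) e] Q_card[OF ijl(3) e] Q_card[OF ijl(4) e]
              h_nonneg[OF ijl(2) e] h_nonneg[OF ijl(3) e] h_nonneg[OF ijl(4) e] cone hmin_e])
      then show ?thesis using ijl distinct by (simp add: add.assoc Un_assoc)
    qed
    then obtain TT where TT: "\<And>e. e \<in> R \<Longrightarrow> K_tiling a b c V E (TT e)"
      "\<And>e. e \<in> R \<Longrightarrow> covered (TT e) \<subseteq> (\<Union>i\<in>e. Q i e)"
      "\<And>e. e \<in> R \<Longrightarrow> \<kappa> * (\<Sum>i\<in>e. h i e) \<le> card (covered (TT e))"
      by metis
    have P_disj: "\<And>i j. i \<in> {1..t} \<Longrightarrow> j \<in> {1..t} \<Longrightarrow> i \<noteq> j \<Longrightarrow> P i \<inter> P j = {}"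
      using clusters(3) by simp
    have disj: "covered (TT e) \<inter> covered (TT e') = {}" if "e \<in> R" "e' \<in> R" "e \<noteq> e'" for e e'
      using pieces_UN_disjoint[where I = "{1..t}" and R = R and Q = Q and P = P,
          OF Q_sub Q_disj P_disj that R(2)[OF that(1)] R(2)[OF that(2)]]
        TT(2)[OF that(1)] TT(2)[OF that(2)] by blast
    have "finite (covered (TT e))" if "e \<in> R" for e
      using covered_subset_if_K_tiling[OF TT(1)[OF that]] clusters(1) by (rule finite_subset)
    then have card_UN: "card (covered (\<Union>e\<in>R. TT e)) = (\<Sum>e\<in>R. card (covered (TT e)))"
      using R(1) disj by (intro card_covered_UN) auto
    have "\<kappa> * tiling_weight {1..t} R h = (\<Sum>e\<in>R. \<kappa> * (\<Sum>i\<in>e. h i e))"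
      using tiling_weight_eq_sum_over_edges[OF h[folded R_def]] R by (simp add: sum_distrib_left)
    also have "\<dots> \<le> (\<Sum>e\<in>R. real (card (covered (TT e))))" using TT(3) by (rule sum_mono)
    also have "\<dots> = card (covered (\<Union>e\<in>R. TT e))" unfolding card_UN by simp
    finally show "\<exists>T. K_tiling a b c V E T \<and>
        (1 - 2 * real b * real c ^ 3 * \<epsilon>) * card (P 1) / (1 - \<epsilon>)
          * tiling_weight {1..t} (cluster_edges E \<epsilon> d t P) h \<le> card (covered T)"
      using K_tiling_UN[where I = R and T = TT] TT(1) disj unfolding \<kappa>_def m_def R_def by blast
  qed
qed

lemma K_tiling_for_large_graphs:
  fixes a b c :: nat and \<epsilon> d :: real
  assumes abc: "1 \<le> a" "a \<le> b" "b \<le> c" and \<epsilon>: "0 < \<epsilon>" and d: "d \<ge> 2 * real b * real c ^ 2 * \<epsilon>"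
    and \<beta>: "2 * real b * real c ^ 3 * \<epsilon> < 1" and t: "0 < t"
  shows "\<exists>n0::nat. \<forall>(V::'a set) E P h.
      three_graph V E \<and> card V \<ge> n0 \<and> regular_partition V E \<epsilon> t P \<and>
      frac_hom_tiling a b c {1..t} (cluster_edges E \<epsilon> d t P) h \<and>
      hmin_ge {1..t} (cluster_edges E \<epsilon> d t P) h (1 / (real b * real c ^ 2))
      \<longrightarrow> (\<exists>\<T>. K_tiling a b c V E \<T> \<and> real (card (covered \<T>)) \<ge>
             (1 - 2 * real b * real c ^ 3 * \<epsilon>) * tiling_weight {1..t} (cluster_edges E \<epsilon> d t P) h
               * real (card V) / real t)"
proof -
  define \<beta> where "\<beta> = 2 * real b * real c ^ 3 * \<epsilon>"
  have \<epsilon>1: "\<epsilon> < 1" using two_eps_le_beta[of b c \<epsilon>] abc \<epsilon> \<beta> by linarith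
  obtain M :: real where M: "\<And>(V::'a set) E t P h. three_graph V E \<Longrightarrow> regular_partition V E \<epsilon> t P \<Longrightarrow>
       0 < t \<Longrightarrow> M \<le> card (P 1) \<Longrightarrow> frac_hom_tiling a b c {1..t} (cluster_edges E \<epsilon> d t P) h \<Longrightarrow>
       hmin_ge {1..t} (cluster_edges E \<epsilon> d t P) h (1 / (real b * real c ^ 2)) \<Longrightarrow>
       \<exists>T. K_tiling a b c V E T \<and>
         (1 - \<beta>) * card (P 1) / (1 - \<epsilon>) * tiling_weight {1..t} (cluster_edges E \<epsilon> d t P) h \<le> card (covered T)"
    using K_tiling_of_frac_hom_tiling[OF abc \<epsilon> d \<beta>] unfolding \<beta>_def by blast
  show ?thesis
  proof (intro exI[of _ "nat \<lceil>t * M / (1 - \<epsilon>)\<rceil>"] allI impI, elim conjE)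
    fix V :: "'a set" and E :: "'a set set" and P h
    assume H: "three_graph V E" and n: "nat \<lceil>t * M / (1 - \<epsilon>)\<rceil> \<le> card V" and P: "regular_partition V E \<epsilon> t P"
      and h: "frac_hom_tiling a b c {1..t} (cluster_edges E \<epsilon> d t P) h"
      and hmin: "hmin_ge {1..t} (cluster_edges E \<epsilon> d t P) h (1 / (real b * real c ^ 2))"
    define W where "W = tiling_weight {1..t} (cluster_edges E \<epsilon> d t P) h"
    have size: "card V / t \<le> card (P 1) / (1 - \<epsilon>)"
      using regular_partition_clusters(5)[OF H P t] t \<epsilon>1 by (simp add: field_simps mult.commute)
    have "t * M / (1 - \<epsilon>) \<le> card V" using n by linarith
    then have "M / (1 - \<epsilon>) \<le> card V / t" using t by (simp add: pos_le_divide_eq mult.commute)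
    then have "M / (1 - \<epsilon>) \<le> card (P 1) / (1 - \<epsilon>)" using size by linarith
    then have "M \<le> card (P 1)" using \<epsilon>1 by (simp add: divide_le_cancel)
    then obtain T where "K_tiling a b c V E T" and "(1 - \<beta>) * card (P 1) / (1 - \<epsilon>) * W \<le> card (covered T)"
      using M[OF H P t _ h hmin] unfolding W_def by blast
    moreover have "(1 - \<beta>) * W * (card V / t) \<le> (1 - \<beta>) * W * (card (P 1) / (1 - \<epsilon>))"
      using size \<beta> tiling_weight_nonneg[OF h] by (intro mult_left_mono) (auto simp: \<beta>_def W_def)
    ultimately show "\<exists>\<T>. K_tiling a b c V E \<T> \<and> real (card (covered \<T>)) \<ge>
        (1 - 2 * real b * real c ^ 3 * \<epsilon>) * tiling_weight {1..t} (cluster_edges E \<epsilon> d t P) h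
          * real (card V) / real t"
      unfolding \<beta>_def[symmetric] W_def[symmetric] by (intro exI[of _ T]) (auto simp: field_simps)
  qed
qed

lemma empty_K_tiling_suffices:
  fixes a b c :: nat and \<epsilon> d :: real
  assumes "\<not> (2 * real b * real c ^ 3 * \<epsilon> < 1 \<and> 0 < t)"
  shows "\<exists>n0::nat. \<forall>(V::'a set) E P h.
      three_graph V E \<and> card V \<ge> n0 \<and> regular_partition V E \<epsilon> t P \<and>
      frac_hom_tiling a b c {1..t} (cluster_edges E \<epsilon> d t P) h \<and>
      hmin_ge {1..t} (cluster_edges E \<epsilon> d t P) h (1 / (real b * real c ^ 2))
      \<longrightarrow> (\<exists>\<T>. K_tiling a b c V E \<T> \<and> real (card (covered \<T>)) \<ge>
             (1 - 2 * real b * real c ^ 3 * \<epsilon>) * tiling_weight {1..t} (cluster_edges E \<epsilon> d t P) h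
               * real (card V) / real t)"
proof (intro exI[of _ 0] allI impI, elim conjE)
  fix V :: "'a set" and E :: "'a set set" and P h
  assume h: "frac_hom_tiling a b c {1..t} (cluster_edges E \<epsilon> d t P) h"
  have "(1 - 2 * real b * real c ^ 3 * \<epsilon>) * tiling_weight {1..t} (cluster_edges E \<epsilon> d t P) h
      * real (card V) / real t \<le> 0"
  proof (cases "t = 0")
    case False
    then show ?thesis using assms tiling_weight_nonneg[OF h]
      by (intro divide_nonpos_nonneg mult_nonpos_nonneg) auto
  qed simp
  then show "\<exists>\<T>. K_tiling a b c V E \<T> \<and> real (card (covered \<T>)) \<ge>
      (1 - 2 * real b * real c ^ 3 * \<epsilon>) * tiling_weight {1..t} (cluster_edges E \<epsilon> d t P) h
        * real (card V) / real t"
    by (intro exI[of _ "{}"]) simp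
qed

theorem proposition4p5:
  fixes a b c :: nat and \<epsilon> d :: real
  assumes "1 \<le> a" "a \<le> b" "b \<le> c"
    and "\<epsilon> > 0" and "d \<ge> 2 * real b * real c ^ 2 * \<epsilon>"
  shows "\<forall>t::nat. \<exists>n0::nat. \<forall>(V::'a set) E P h.
      three_graph V E \<and> card V \<ge> n0 \<and>
      regular_partition V E \<epsilon> t P \<and>
      frac_hom_tiling a b c {1..t} (cluster_edges E \<epsilon> d t P) h \<and>
      hmin_ge {1..t} (cluster_edges E \<epsilon> d t P) h (1 / (real b * real c ^ 2))
      \<longrightarrow> (\<exists>\<T>. K_tiling a b c V E \<T> \<and>
             real (card (covered \<T>)) \<ge>
               (1 - 2 * real b * real c ^ 3 * \<epsilon>)
               * tiling_weight {1..t} (cluster_edges E \<epsilon> d t P) h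
               * real (card V) / real t)"
  using K_tiling_for_large_graphs[OF assms] empty_K_tiling_suffices by blast

end
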